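(* Let $G$ be a countable group, $\Sigma$ a map sequence for $G$ and $(G,X,\mu)$ a $G$-system. Let $\alpha,\beta\in\mathcal P$ and suppose that $\alpha$ refines $\beta$. Then for every finite $F\subset G$, $$H(\Sigma,\beta:F)-H(\beta)\ge H(\Sigma,\alpha:F)-H(\alpha).$$
   Context: $\mathrm{Sym}(m)$ is the symmetric group on $\{1,\dots,m\}$. A map sequence for $G$ is a sequence $\Sigma=\{\sigma_i\}$ of maps (not necessarily homomorphisms) $\sigma_i:G\to\mathrm{Sym}(m_i)$ with $m_i\to\infty$. A $G$-system is a measure-preserving action on a probability space $(X,\mu)$. $\mathcal P$ is the set of measurable (ordered) partitions $\alpha=(A_1,A_2,\dots)$ of $X$ into at most countably many atoms with finite entropy $H(\alpha)=-\sum\mu(A_i)\log\mu(A_i)$, modulo null sets. $\alpha$ refines $\beta$ (written $\beta\le\alpha$) if every atom of $\alpha$ is contained up to a null set in an atom of $\beta$. With $\zeta$ uniform on $\{1,\dots,m\}$, for $\sigma:G\to\mathrm{Sym}(m)$, a partition $\beta=(B_1,\dots)$ of $\{1,\dots,m\}$ and finite $F$: $d_F(\alpha,\beta)=\sum_{\phi:F\to\mathbb N}|\mu(\bigcap_{f\in F}fA_{\phi(f)})-\zeta(\bigcap_{f\in F}\sigma(f)B_{\phi(f)})|$ (missing atoms empty). For finite $\alpha=(A_1,\dots,A_u)$, $\mathcal{AP}(\sigma,\alpha:F,\epsilon)$ is the set of ordered partitions $(B_1,\dots,B_u)$ of $\{1,\dots,m\}$ with $d_F(\alpha,\beta)\le\epsilon$,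 and $H(\Sigma,\alpha:F)=\lim_{\epsilon\to0}\limsup_i\frac1{m_i}\log|\mathcal{AP}(\sigma_i,\alpha:F,\epsilon)|$ ($\log 0=-\infty$). A chain of $\alpha$ is a sequence of finite partitions $\alpha_1\le\alpha_2\le\cdots\le\alpha$ with $\bigvee_n\alpha_n=\alpha$. For general $\alpha\in\mathcal P$, $H(\Sigma,\alpha:F)=\inf\{\lim_nH(\Sigma,\alpha_n:F):\{\alpha_n\}\text{ a chain of }\alpha\}$. *)

theory Defs
  imports "HOL-Probability.Probability" "HOL-Combinatorics.Permutations" "HOL-Library.Countable"
begin

definition map_sequence :: "(nat \<Rightarrow> 'g \<Rightarrow> nat \<Rightarrow> nat) \<Rightarrow> (nat \<Rightarrow> nat) \<Rightarrow> bool" where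
  "map_sequence \<sigma> m \<longleftrightarrow> (\<forall>i g. \<sigma> i g permutes {1..m i}) \<and> filterlim m at_top sequentially"

definition mp_action :: "'x measure \<Rightarrow> ('g::group_add \<Rightarrow> 'x \<Rightarrow> 'x) \<Rightarrow> bool" where
  "mp_action M T \<longleftrightarrow> prob_space M
     \<and> (\<forall>g. T g \<in> M \<rightarrow>\<^sub>M M \<and> distr M M (T g) = M)
     \<and> (\<forall>x\<in>space M. T 0 x = x)
     \<and> (\<forall>g h. \<forall>x\<in>space M. T (g + h) x = T g (T h x))"

text \<open>Ordered measurable partitions into at most countably many atoms (indexed by nat;
  missing atoms are empty).\<close>
definition is_partition :: "'x measure \<Rightarrow> (nat \<Rightarrow> 'x set) \<Rightarrow> bool" where
  "is_partition M \<alpha> \<longleftrightarrow> (\<forall>i. \<alpha> i \<in> sets M) \<and> disjoint_family \<alpha> \<and> (\<Union>i. \<alpha> i) = space M"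

definition part_entropy :: "'x measure \<Rightarrow> (nat \<Rightarrow> 'x set) \<Rightarrow> real" where
  "part_entropy M \<alpha> = (\<Sum>i. - measure M (\<alpha> i) * ln (measure M (\<alpha> i)))"

definition in_P :: "'x measure \<Rightarrow> (nat \<Rightarrow> 'x set) \<Rightarrow> bool" where
  "in_P M \<alpha> \<longleftrightarrow> is_partition M \<alpha> \<and> summable (\<lambda>i. - measure M (\<alpha> i) * ln (measure M (\<alpha> i)))"

text \<open>part_le M beta alpha: alpha refines beta (every atom of alpha is contained, up to a
  null set, in an atom of beta).\<close>
definition part_le :: "'x measure \<Rightarrow> (nat \<Rightarrow> 'x set) \<Rightarrow> (nat \<Rightarrow> 'x set) \<Rightarrow> bool" where
  "part_le M \<beta> \<alpha> \<longleftrightarrow> (\<forall>i. \<exists>j. emeasure M (\<alpha> i - \<beta> j) = 0)"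

definition finite_part :: "'x measure \<Rightarrow> (nat \<Rightarrow> 'x set) \<Rightarrow> bool" where
  "finite_part M \<alpha> \<longleftrightarrow> (\<exists>u. \<forall>i\<ge>u. emeasure M (\<alpha> i) = 0)"

definition part_len :: "'x measure \<Rightarrow> (nat \<Rightarrow> 'x set) \<Rightarrow> nat" where
  "part_len M \<alpha> = (LEAST u. \<forall>i\<ge>u. emeasure M (\<alpha> i) = 0)"

text \<open>A chain of alpha: finite partitions alpha_1 <= alpha_2 <= ... <= alpha whose join is
  alpha (every atom of alpha lies, modulo null sets, in the sigma-algebra generated by the
  atoms of all alpha_n).\<close>
definition is_chain :: "'x measure \<Rightarrow> (nat \<Rightarrow> nat \<Rightarrow> 'x set) \<Rightarrow> (nat \<Rightarrow> 'x set) \<Rightarrow> bool" where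
  "is_chain M \<alpha>s \<alpha> \<longleftrightarrow>
     (\<forall>n. is_partition M (\<alpha>s n) \<and> finite_part M (\<alpha>s n))
   \<and> (\<forall>n. part_le M (\<alpha>s n) (\<alpha>s (Suc n)))
   \<and> (\<forall>n. part_le M (\<alpha>s n) \<alpha>)
   \<and> (\<forall>i. \<exists>S \<in> sigma_sets (space M) (\<Union>n. range (\<alpha>s n)).
          emeasure M ((S - \<alpha> i) \<union> (\<alpha> i - S)) = 0)"

definition dF :: "'x measure \<Rightarrow> ('g \<Rightarrow> 'x \<Rightarrow> 'x) \<Rightarrow> 'g set \<Rightarrow> (nat \<Rightarrow> 'x set)
                  \<Rightarrow> ('g \<Rightarrow> nat \<Rightarrow> nat) \<Rightarrow> nat \<Rightarrow> (nat \<Rightarrow> nat set) \<Rightarrow> real" where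
  "dF M T F \<alpha> \<sigma> m B =
     infsum (\<lambda>\<phi>. \<bar>measure M (space M \<inter> (\<Inter>f\<in>F. T f ` \<alpha> (\<phi> f)))
                  - real (card ({1..m} \<inter> (\<Inter>f\<in>F. \<sigma> f ` B (\<phi> f)))) / real m\<bar>)
            (F \<rightarrow>\<^sub>E (UNIV :: nat set))"

definition AP :: "'x measure \<Rightarrow> ('g \<Rightarrow> 'x \<Rightarrow> 'x) \<Rightarrow> 'g set \<Rightarrow> (nat \<Rightarrow> 'x set)
                  \<Rightarrow> ('g \<Rightarrow> nat \<Rightarrow> nat) \<Rightarrow> nat \<Rightarrow> real \<Rightarrow> (nat \<Rightarrow> nat set) set" where
  "AP M T F \<alpha> \<sigma> m \<epsilon> = {B. (\<forall>i. B i \<subseteq> {1..m}) \<and> disjoint_family B \<and> (\<Union>i. B i) = {1..m}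
      \<and> (\<forall>i\<ge>part_len M \<alpha>. B i = {}) \<and> dF M T F \<alpha> \<sigma> m B \<le> \<epsilon>}"

definition sofic_H_fin :: "'x measure \<Rightarrow> ('g \<Rightarrow> 'x \<Rightarrow> 'x) \<Rightarrow> (nat \<Rightarrow> 'g \<Rightarrow> nat \<Rightarrow> nat)
                  \<Rightarrow> (nat \<Rightarrow> nat) \<Rightarrow> 'g set \<Rightarrow> (nat \<Rightarrow> 'x set) \<Rightarrow> ereal" where
  "sofic_H_fin M T \<sigma> m F \<alpha> =
     Lim (at_right (0::real))
       (\<lambda>\<epsilon>. limsup (\<lambda>i. let c = card (AP M T F \<alpha> (\<sigma> i) (m i) \<epsilon>) in
                         if c = 0 then (-\<infinity>::ereal) else ereal (ln (real c) / real (m i))))"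

definition sofic_H :: "'x measure \<Rightarrow> ('g \<Rightarrow> 'x \<Rightarrow> 'x) \<Rightarrow> (nat \<Rightarrow> 'g \<Rightarrow> nat \<Rightarrow> nat)
                  \<Rightarrow> (nat \<Rightarrow> nat) \<Rightarrow> 'g set \<Rightarrow> (nat \<Rightarrow> 'x set) \<Rightarrow> ereal" where
  "sofic_H M T \<sigma> m F \<alpha> =
     (if finite_part M \<alpha> then sofic_H_fin M T \<sigma> m F \<alpha>
      else Inf {lim (\<lambda>n. sofic_H_fin M T \<sigma> m F (\<alpha>s n)) | \<alpha>s. is_chain M \<alpha>s \<alpha>})"

end

theory Submission
  imports Defs
begin

text \<open>
  For finite partitions \<open>\<gamma> \<le> \<delta>\<close>, merging the atoms of a model partition of \<open>\<delta>\<close> along the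
  map \<open>\<delta> \<rightarrow> \<gamma>\<close> can only decrease \<open>d\<^sub>F\<close>, so it sends \<open>AP(\<sigma>, \<delta> : F, \<epsilon>)\<close> into
  \<open>AP(\<sigma>, \<gamma> : F, \<epsilon>)\<close>. A fibre of this map is counted by weighting the labellings of
  \<open>{1..n}\<close> with (regularised) conditional probabilities \<open>\<mu>(\<delta>\<^sub>j) / \<mu>(\<gamma>\<^sub>k)\<close>; since the
  empirical distribution of a good model is close to \<open>\<mu>\<close>, every fibre has at most
  \<open>exp (n (H(\<delta>) - H(\<gamma>) + o(1)))\<close> elements. Hence \<open>H(\<Sigma>, \<alpha> : F) - H(\<alpha>)\<close> decreases along
  refinement of finite partitions.

  For general \<open>\<beta> \<le> \<alpha>\<close> and a chain \<open>\<beta>\<^sub>n\<close> of \<open>\<beta>\<close>, keeping the first \<open>n\<close> atoms of \<open>\<alpha>\<close>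
  and cutting the rest by \<open>\<beta>\<^sub>n\<close> gives a chain \<open>\<alpha>\<^sub>n\<close> of \<open>\<alpha>\<close> with \<open>\<beta>\<^sub>n \<le> \<alpha>\<^sub>n\<close>. Both
  \<open>H(\<Sigma>, \<cdot> : F) - H(\<cdot>)\<close> sequences decrease, and \<open>H(\<alpha>\<^sub>n) \<rightarrow> H(\<alpha>)\<close> along any chain
  (dominated convergence), so the inequality passes to the limit.
\<close>

definition atom_index :: "(nat \<Rightarrow> 'a set) \<Rightarrow> 'a \<Rightarrow> nat" where
  "atom_index \<alpha> x = (THE i. x \<in> \<alpha> i)"

lemma atom_index_eq: "disjoint_family \<alpha> \<Longrightarrow> x \<in> \<alpha> i \<Longrightarrow> atom_index \<alpha> x = i"
  unfolding atom_index_def by (rule the_equality) (auto simp: disjoint_family_on_def)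

lemma atom_index_mem: "disjoint_family \<alpha> \<Longrightarrow> x \<in> (\<Union>i. \<alpha> i) \<Longrightarrow> x \<in> \<alpha> (atom_index \<alpha> x)"
  by (metis UN_E atom_index_eq)

lemma measure_eq_if_diffs_null:
  assumes "A \<in> sets M" "B \<in> sets M" "N \<in> null_sets M" "A - B \<subseteq> N" "B - A \<subseteq> N"
  shows "measure M A = measure M B"
proof (rule measure_eq_AE)
  show "AE x in M. x \<in> A \<longleftrightarrow> x \<in> B"
    using AE_not_in[OF assms(3)] by eventually_elim (use assms in auto)
qed (use assms in auto)

lemma (in finite_measure) measure_ae_decseq_tendsto:
  assumes A: "\<And>n. A n \<in> sets M" and null: "\<And>n. A (Suc n) - A n \<in> null_sets M"
  shows "(\<lambda>n. measure M (A n)) \<longlonglongrightarrow> measure M (\<Inter>n. A n)"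
proof -
  define N where "N = (\<Union>n. A (Suc n) - A n)"
  have N: "N \<in> null_sets M" unfolding N_def using null by auto
  define E where "E n = (\<Inter>k\<le>n. A k)" for n
  have E: "E n \<in> sets M" for n unfolding E_def using A by auto
  have mono_off_N: "x \<in> A k" if "x \<in> A n" "x \<notin> N" "k \<le> n" for x n k
    using that
  proof (induction n arbitrary: k)
    case (Suc n)
    then have "x \<in> A n" unfolding N_def by blast
    then show ?case using Suc by (cases "k = Suc n") auto
  qed simp
  have "measure M (E n) = measure M (A n)" for n
    by (rule measure_eq_if_diffs_null[OF E A N]) (auto simp: E_def dest: mono_off_N)
  moreover have "(\<lambda>n. measure M (E n)) \<longlonglongrightarrow> measure M (\<Inter>n. E n)"
    using E by (intro finite_Lim_measure_decseq) (auto simp: decseq_def E_def)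
  moreover have "(\<Inter>n. E n) = (\<Inter>n. A n)" unfolding E_def by auto
  ultimately show ?thesis by simp
qed

lemma null_or_conull_sigma_sets:
  assumes G: "G \<subseteq> sets M" and D: "D \<in> sets M"
    and gen: "\<And>a. a \<in> G \<Longrightarrow> D \<inter> a \<in> null_sets M \<or> D - a \<in> null_sets M"
    and S: "S \<in> sigma_sets (space M) G"
  shows "D \<inter> S \<in> null_sets M \<or> D - S \<in> null_sets M"
proof -
  have sub: "sigma_sets (space M) G \<subseteq> sets M" by (rule sets.sigma_sets_subset[OF G])
  have Dsp: "D \<subseteq> space M" using sets.sets_into_space[OF D] .
  from S show ?thesis
  proof (induction rule: sigma_sets.induct)
    case (Basic a) then show ?case by (rule gen)
  next
    case Empty then show ?case by simp
  next
    case (Compl a)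
    have "D \<inter> (space M - a) = D - a" "D - (space M - a) = D \<inter> a" using Dsp by auto
    with Compl.IH show ?case by (simp only:) blast
  next
    case (Union a)
    have a: "a i \<in> sets M" for i using Union.hyps sub by blast
    show ?case
    proof (cases "\<exists>i. D - a i \<in> null_sets M")
      case True
      then obtain i where "D - a i \<in> null_sets M" by blast
      moreover have "D - (\<Union>i. a i) \<in> sets M" using D a by (intro sets.Diff sets.countable_UN) auto
      ultimately have "D - (\<Union>i. a i) \<in> null_sets M" by (rule null_sets_subset) blast
      then show ?thesis by simp
    next
      case False
      then have "(\<Union>i. D \<inter> a i) \<in> null_sets M" using Union.IH by (intro null_sets_UN) blast
      moreover have "D \<inter> (\<Union>i. a i) = (\<Union>i. D \<inter> a i)" by blast
      ultimately show ?thesis by metis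
    qed
  qed
qed

lemma card_le_exp_of_weight:
  fixes W :: "'b \<Rightarrow> real"
  assumes P: "finite P" "\<And>y. y \<in> P \<Longrightarrow> 0 \<le> W y" "(\<Sum>y\<in>P. W y) = 1"
    and g: "inj_on g S" "g ` S \<subseteq> P" and lower: "\<And>x. x \<in> S \<Longrightarrow> exp (- K) \<le> W (g x)"
  shows "real (card S) \<le> exp K"
proof -
  have "real (card S) * exp (- K) = (\<Sum>x\<in>S. exp (- K))" by simp
  also have "\<dots> \<le> (\<Sum>x\<in>S. W (g x))" by (intro sum_mono lower)
  also have "\<dots> = (\<Sum>y\<in>g ` S. W y)" using sum.reindex[OF g(1), of W] by simp
  also have "\<dots> \<le> (\<Sum>y\<in>P. W y)" by (rule sum_mono2) (use P g in auto)
  finally show ?thesis using P(3) by (simp add: exp_minus field_simps)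
qed

lemma tendsto_Lim_at_right_mono:
  fixes g :: "real \<Rightarrow> ereal"
  assumes mono: "\<And>a b. 0 < a \<Longrightarrow> a \<le> b \<Longrightarrow> g a \<le> g b"
  shows "(g \<longlongrightarrow> Lim (at_right 0) g) (at_right 0)"
proof -
  have "(g \<longlongrightarrow> (INF e\<in>{0<..}. g e)) (at_right 0)"
  proof (rule order_tendstoI)
    fix a assume a: "a < (INF e\<in>{0<..}. g e)"
    have "\<forall>y>0. y < 1 \<longrightarrow> a < g y"
      using a by (auto intro: order_less_le_trans INF_lower)
    then show "eventually (\<lambda>x. a < g x) (at_right 0)"
      unfolding eventually_at_right_field by (intro exI[of _ 1]) auto
  next
    fix a assume "(INF e\<in>{0<..}. g e) < a"
    then obtain e where e: "e > 0" "g e < a" by (auto simp: INF_less_iff)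
    then have "\<forall>y>0. y < e \<longrightarrow> g y < a" using mono by (meson less_imp_le order_le_less_trans)
    then show "eventually (\<lambda>x. g x < a) (at_right 0)"
      unfolding eventually_at_right_field using e(1) by blast
  qed
  then show ?thesis by (simp add: tendsto_Lim)
qed

section \<open>Partitions, refinement and chains\<close>

definition coarse_atom :: "'x measure \<Rightarrow> (nat \<Rightarrow> 'x set) \<Rightarrow> (nat \<Rightarrow> 'x set) \<Rightarrow> nat \<Rightarrow> nat" where
  "coarse_atom M \<gamma> \<delta> j = (SOME k. k < part_len M \<gamma> \<and> emeasure M (\<delta> j - \<gamma> k) = 0)"

definition chain_atom :: "'x measure \<Rightarrow> (nat \<Rightarrow> nat \<Rightarrow> 'x set) \<Rightarrow> (nat \<Rightarrow> 'x set) \<Rightarrow> nat \<Rightarrow> nat \<Rightarrow> 'x set" where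
  "chain_atom M \<gamma>s \<gamma> k n = \<gamma>s n (coarse_atom M (\<gamma>s n) \<gamma> k)"

locale mp_system =
  fixes M :: "'x measure" and T :: "'g::group_add \<Rightarrow> 'x \<Rightarrow> 'x"
  assumes mp_action: "mp_action M T"
begin

sublocale prob_space M using mp_action by (simp add: mp_action_def)

lemma T_measurable: "T g \<in> M \<rightarrow>\<^sub>M M"
  using mp_action by (simp add: mp_action_def)

lemma distr_T: "distr M M (T g) = M"
  using mp_action by (simp add: mp_action_def)

lemma T_in_space: "x \<in> space M \<Longrightarrow> T g x \<in> space M"
  using measurable_space[OF T_measurable] .

lemma T_uminus_T: "x \<in> space M \<Longrightarrow> T (- g) (T g x) = x"
  using mp_action unfolding mp_action_def by (metis add.left_inverse)

lemma T_T_uminus: "x \<in> space M \<Longrightarrow> T g (T (- g) x) = x"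
  using T_uminus_T[of x "- g"] by simp

lemma image_T: "A \<subseteq> space M \<Longrightarrow> T g ` A = T (- g) -` A \<inter> space M"
  using T_in_space T_uminus_T T_T_uminus by (auto simp: image_iff) (metis T_in_space)

lemma mem_image_T: "A \<subseteq> space M \<Longrightarrow> x \<in> space M \<Longrightarrow> x \<in> T g ` A \<longleftrightarrow> T (- g) x \<in> A"
  using image_T by blast

lemma sets_image_T: "A \<in> sets M \<Longrightarrow> T g ` A \<in> sets M"
  using image_T[OF sets.sets_into_space] measurable_sets[OF T_measurable] by simp

lemma emeasure_image_T: "A \<in> sets M \<Longrightarrow> emeasure M (T g ` A) = emeasure M A"
  using image_T[OF sets.sets_into_space] emeasure_distr[OF T_measurable, of A "- g"] distr_T
  by simp

lemma measure_image_T: "A \<in> sets M \<Longrightarrow> measure M (T g ` A) = measure M A"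
  by (simp add: measure_def emeasure_image_T)

lemma null_sets_image_T: "A \<in> null_sets M \<Longrightarrow> T g ` A \<in> null_sets M"
  by (simp add: null_sets_def sets_image_T emeasure_image_T)

end

context prob_space begin

lemma partition_sets: "is_partition M \<alpha> \<Longrightarrow> \<alpha> i \<in> sets M"
  unfolding is_partition_def by blast

lemma partition_subset_space: "is_partition M \<alpha> \<Longrightarrow> \<alpha> i \<subseteq> space M"
  unfolding is_partition_def by blast

lemma partition_disjoint: "is_partition M \<alpha> \<Longrightarrow> disjoint_family \<alpha>"
  unfolding is_partition_def by blast

lemma partition_atom_index: "is_partition M \<alpha> \<Longrightarrow> x \<in> space M \<Longrightarrow> x \<in> \<alpha> (atom_index \<alpha> x)"
  unfolding is_partition_def using atom_index_mem[of \<alpha> x] by auto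

lemma partition_atom_index_eq: "is_partition M \<alpha> \<Longrightarrow> x \<in> \<alpha> i \<Longrightarrow> atom_index \<alpha> x = i"
  by (rule atom_index_eq[OF partition_disjoint])

lemma partition_atom_index_iff:
  "is_partition M \<alpha> \<Longrightarrow> x \<in> space M \<Longrightarrow> x \<in> \<alpha> i \<longleftrightarrow> atom_index \<alpha> x = i"
  using partition_atom_index partition_atom_index_eq by metis

lemma part_len_emeasure:
  assumes "finite_part M \<alpha>" "part_len M \<alpha> \<le> i"
  shows "emeasure M (\<alpha> i) = 0"
proof -
  have "\<forall>i\<ge>part_len M \<alpha>. emeasure M (\<alpha> i) = 0"
    using assms(1) unfolding finite_part_def part_len_def by (rule LeastI_ex)
  then show ?thesis using assms(2) by blast
qed

lemma part_len_measure: "finite_part M \<alpha> \<Longrightarrow> part_len M \<alpha> \<le> i \<Longrightarrow> measure M (\<alpha> i) = 0"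
  by (simp add: measure_def part_len_emeasure)

lemma part_len_null_sets:
  "is_partition M \<alpha> \<Longrightarrow> finite_part M \<alpha> \<Longrightarrow> part_len M \<alpha> \<le> i \<Longrightarrow> \<alpha> i \<in> null_sets M"
  by (simp add: null_sets_def partition_sets part_len_emeasure)

lemma part_len_pos: "is_partition M \<alpha> \<Longrightarrow> finite_part M \<alpha> \<Longrightarrow> 0 < part_len M \<alpha>"
proof (rule ccontr)
  assume \<alpha>: "is_partition M \<alpha>" "finite_part M \<alpha>" and "\<not> 0 < part_len M \<alpha>"
  then have "(\<Union>i. \<alpha> i) \<in> null_sets M" using part_len_null_sets by auto
  then show False using \<alpha>(1) emeasure_space_1 by (simp add: is_partition_def null_sets_def)
qed

lemma part_entropy_finite_part:
  "finite_part M \<alpha> \<Longrightarrow> part_entropy M \<alpha> = (\<Sum>i<part_len M \<alpha>. - measure M (\<alpha> i) * ln (measure M (\<alpha> i)))"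
  unfolding part_entropy_def by (rule suminf_finite) (auto simp: part_len_measure)

lemma part_leE:
  assumes "part_le M \<gamma> \<delta>" "is_partition M \<gamma>" "is_partition M \<delta>"
  obtains k where "\<delta> i - \<gamma> k \<in> null_sets M"
proof -
  obtain k where "emeasure M (\<delta> i - \<gamma> k) = 0" using assms(1) unfolding part_le_def by blast
  moreover have "\<delta> i - \<gamma> k \<in> sets M" using assms(2,3) by (intro sets.Diff partition_sets)
  ultimately show ?thesis using that by (simp add: null_sets_def)
qed

lemma part_leI:
  assumes "is_partition M \<gamma>" "is_partition M \<delta>" "\<And>i. \<exists>k. \<delta> i - \<gamma> k \<in> null_sets M"
  shows "part_le M \<gamma> \<delta>"
  using assms(3) unfolding part_le_def null_sets_def by blast

lemma part_le_refl: "part_le M \<alpha> \<alpha>"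
  unfolding part_le_def by (metis Diff_cancel emeasure_empty)

lemma part_le_trans:
  assumes "is_partition M \<alpha>" "is_partition M \<beta>" "is_partition M \<gamma>"
    and "part_le M \<alpha> \<beta>" "part_le M \<beta> \<gamma>"
  shows "part_le M \<alpha> \<gamma>"
proof (rule part_leI[OF assms(1,3)])
  fix i
  obtain j where j: "\<gamma> i - \<beta> j \<in> null_sets M" using part_leE[OF assms(5,2,3)] .
  obtain k where k: "\<beta> j - \<alpha> k \<in> null_sets M" using part_leE[OF assms(4,1,2)] .
  have "\<gamma> i - \<alpha> k \<in> null_sets M"
    by (rule null_sets_subset[OF null_sets.Un[OF j k]])
       (use partition_sets[OF assms(3)] partition_sets[OF assms(1)] in auto)
  then show "\<exists>k. \<gamma> i - \<alpha> k \<in> null_sets M" ..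
qed

lemma
  assumes "is_partition M \<gamma>" "finite_part M \<gamma>" "is_partition M \<delta>" "part_le M \<gamma> \<delta>"
  shows coarse_atom_less: "coarse_atom M \<gamma> \<delta> j < part_len M \<gamma>"
    and coarse_atom_null: "\<delta> j - \<gamma> (coarse_atom M \<gamma> \<delta> j) \<in> null_sets M"
proof -
  have "\<exists>k. k < part_len M \<gamma> \<and> emeasure M (\<delta> j - \<gamma> k) = 0"
  proof -
    obtain k where k: "\<delta> j - \<gamma> k \<in> null_sets M" using part_leE[OF assms(4,1,3)] .
    show ?thesis
    proof (cases "k < part_len M \<gamma>")
      case True then show ?thesis using k by (auto simp: null_sets_def)
    next
      case False
      \<comment> \<open>then \<open>\<delta> j\<close> is null, and any atom of \<open>\<gamma>\<close> will do\<close>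
      then have "(\<delta> j - \<gamma> k) \<union> \<gamma> k \<in> null_sets M"
        using k part_len_null_sets[OF assms(1,2)] False by (intro null_sets.Un) auto
      then have "\<delta> j \<in> null_sets M"
        by (rule null_sets_subset) (auto simp: partition_sets[OF assms(3)])
      then have "\<delta> j - \<gamma> 0 \<in> null_sets M"
        by (rule null_sets_subset) (auto simp: partition_sets assms)
      then show ?thesis using part_len_pos[OF assms(1,2)] by (auto simp: null_sets_def)
    qed
  qed
  from someI_ex[OF this] show "coarse_atom M \<gamma> \<delta> j < part_len M \<gamma>"
    and "\<delta> j - \<gamma> (coarse_atom M \<gamma> \<delta> j) \<in> null_sets M"
    unfolding coarse_atom_def using assms by (auto simp: null_sets_def partition_sets)
qed

lemma measure_le_coarse_atom:
  assumes "is_partition M \<gamma>" "finite_part M \<gamma>" "is_partition M \<delta>" "part_le M \<gamma> \<delta>"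
  shows "measure M (\<delta> j) \<le> measure M (\<gamma> (coarse_atom M \<gamma> \<delta> j))"
proof -
  let ?k = "coarse_atom M \<gamma> \<delta> j"
  have "measure M (\<delta> j) \<le> measure M (\<gamma> ?k \<union> (\<delta> j - \<gamma> ?k))"
    by (rule finite_measure_mono) (use assms in \<open>auto simp: partition_sets\<close>)
  also have "\<dots> = measure M (\<gamma> ?k)"
    by (rule measure_Un_null_set) (use assms in \<open>auto simp: partition_sets coarse_atom_null\<close>)
  finally show ?thesis .
qed

lemma
  assumes "is_chain M \<gamma>s \<gamma>"
  shows chain_partition: "is_partition M (\<gamma>s n)"
    and chain_finite_part: "finite_part M (\<gamma>s n)"
    and chain_le_Suc: "part_le M (\<gamma>s n) (\<gamma>s (Suc n))"
    and chain_le_limit: "part_le M (\<gamma>s n) \<gamma>"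
  using assms unfolding is_chain_def by blast+

lemma is_chain_const:
  assumes "is_partition M \<beta>" "finite_part M \<beta>"
  shows "is_chain M (\<lambda>n. \<beta>) \<beta>"
proof -
  have "\<exists>S\<in>sigma_sets (space M) (\<Union>n. range \<beta>). emeasure M ((S - \<beta> i) \<union> (\<beta> i - S)) = 0" for i
    by (intro bexI[of _ "\<beta> i"]) auto
  then show ?thesis unfolding is_chain_def using assms part_le_refl by simp
qed

lemma coarse_atom_sums:
  assumes \<gamma>: "is_partition M \<gamma>" "finite_part M \<gamma>" and \<delta>: "is_partition M \<delta>"
    and le: "part_le M \<gamma> \<delta>"
  shows "(\<lambda>j. if coarse_atom M \<gamma> \<delta> j = k then measure M (\<delta> j) else 0) sums measure M (\<gamma> k)"
proof -
  let ?c = "coarse_atom M \<gamma> \<delta>"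
  define A where "A j = (if ?c j = k then \<delta> j else {})" for j
  have A: "range A \<subseteq> sets M" unfolding A_def using partition_sets[OF \<delta>] by auto
  have "(\<lambda>j. measure M (A j)) sums measure M (\<Union>j. A j)"
    using A partition_disjoint[OF \<delta>] unfolding A_def
    by (intro measure_UNION) (auto simp: disjoint_family_on_def)
  moreover have "(\<lambda>j. measure M (A j)) = (\<lambda>j. if ?c j = k then measure M (\<delta> j) else 0)"
    unfolding A_def by auto
  moreover have "measure M (\<Union>j. A j) = measure M (\<gamma> k)"
  proof (rule measure_eq_if_diffs_null)
    define Z where "Z = (\<Union>j. \<delta> j - \<gamma> (?c j))"
    show "Z \<in> null_sets M" unfolding Z_def using coarse_atom_null[OF \<gamma> \<delta> le] by (rule null_sets_UN)
    have "y \<in> \<gamma> k \<longleftrightarrow> y \<in> (\<Union>j. A j)" if y: "y \<in> space M" "y \<notin> Z" for y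
    proof -
      have "y \<in> \<gamma> (?c (atom_index \<delta> y))"
        using partition_atom_index[OF \<delta> y(1)] y(2) unfolding Z_def by blast
      then have "y \<in> \<gamma> k \<longleftrightarrow> ?c (atom_index \<delta> y) = k"
        using partition_atom_index_eq[OF \<gamma>(1)] by metis
      also have "\<dots> \<longleftrightarrow> y \<in> (\<Union>j. A j)"
        unfolding A_def UN_iff by (simp add: partition_atom_index_iff[OF \<delta> y(1)]) blast
      finally show ?thesis .
    qed
    moreover have "(\<Union>j. A j) \<subseteq> space M" using A sets.sets_into_space by blast
    ultimately show "(\<Union>j. A j) - \<gamma> k \<subseteq> Z" "\<gamma> k - (\<Union>j. A j) \<subseteq> Z"
      using partition_subset_space[OF \<gamma>(1)] by blast+
  qed (use sets.countable_UN[OF A] partition_sets[OF \<gamma>(1)] in simp_all)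
  ultimately show ?thesis by simp
qed

lemma entropy_sums_coarse_atom:
  assumes \<gamma>: "is_partition M \<gamma>" "finite_part M \<gamma>" and \<delta>: "is_partition M \<delta>"
    and le: "part_le M \<gamma> \<delta>"
  shows "(\<lambda>j. measure M (\<delta> j) * - ln (measure M (\<gamma> (coarse_atom M \<gamma> \<delta> j)))) sums part_entropy M \<gamma>"
proof -
  let ?c = "coarse_atom M \<gamma> \<delta>" and ?u = "part_len M \<gamma>"
  have "(\<lambda>j. \<Sum>k<?u. (if ?c j = k then measure M (\<delta> j) else 0) * - ln (measure M (\<gamma> k)))
      sums (\<Sum>k<?u. measure M (\<gamma> k) * - ln (measure M (\<gamma> k)))"
    by (intro sums_sum sums_mult2 coarse_atom_sums[OF \<gamma> \<delta> le])
  moreover have "(\<Sum>k<?u. (if ?c j = k then measure M (\<delta> j) else 0) * - ln (measure M (\<gamma> k)))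
      = measure M (\<delta> j) * - ln (measure M (\<gamma> (?c j)))" for j
  proof -
    have "(\<Sum>k<?u. (if ?c j = k then measure M (\<delta> j) else 0) * - ln (measure M (\<gamma> k)))
        = (\<Sum>k<?u. if ?c j = k then measure M (\<delta> j) * - ln (measure M (\<gamma> k)) else 0)"
      by (rule sum.cong) auto
    then show ?thesis using coarse_atom_less[OF \<gamma> \<delta> le, of j] by simp
  qed
  ultimately show ?thesis using part_entropy_finite_part[OF \<gamma>(2)] by simp
qed

lemma
  assumes ch: "is_chain M \<gamma>s \<gamma>" and \<gamma>: "is_partition M \<gamma>"
  shows sets_chain_atom: "chain_atom M \<gamma>s \<gamma> k n \<in> sets M"
    and atom_diff_chain_atom_null: "\<gamma> k - chain_atom M \<gamma>s \<gamma> k n \<in> null_sets M"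
    and chain_atom_disjoint: "j \<noteq> coarse_atom M (\<gamma>s n) \<gamma> k \<Longrightarrow> \<gamma>s n j \<inter> chain_atom M \<gamma>s \<gamma> k n = {}"
  using partition_sets[OF chain_partition[OF ch]]
    coarse_atom_null[OF chain_partition[OF ch] chain_finite_part[OF ch] \<gamma> chain_le_limit[OF ch]]
    partition_disjoint[OF chain_partition[OF ch]]
  unfolding chain_atom_def disjoint_family_on_def by auto

lemma chain_atom_Suc_diff_null:
  assumes ch: "is_chain M \<gamma>s \<gamma>" and \<gamma>: "is_partition M \<gamma>" and G: "\<gamma> k \<notin> null_sets M"
  shows "chain_atom M \<gamma>s \<gamma> k (Suc n) - chain_atom M \<gamma>s \<gamma> k n \<in> null_sets M"
proof -
  let ?A = "chain_atom M \<gamma>s \<gamma> k"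
  note part = chain_partition[OF ch]
  obtain j where j: "?A (Suc n) - \<gamma>s n j \<in> null_sets M"
    using part_leE[OF chain_le_Suc[OF ch] part part] unfolding chain_atom_def .
  show ?thesis
  proof (cases "j = coarse_atom M (\<gamma>s n) \<gamma> k")
    case False
    \<comment> \<open>otherwise \<open>\<gamma> k\<close> would be covered by null sets\<close>
    then have "\<gamma> k \<subseteq> (\<gamma> k - ?A (Suc n)) \<union> (?A (Suc n) - \<gamma>s n j) \<union> (\<gamma> k - ?A n)"
      using chain_atom_disjoint[OF ch \<gamma>] by blast
    moreover have "(\<gamma> k - ?A (Suc n)) \<union> (?A (Suc n) - \<gamma>s n j) \<union> (\<gamma> k - ?A n) \<in> null_sets M"
      using atom_diff_chain_atom_null[OF ch \<gamma>] j by blast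
    ultimately show ?thesis using partition_sets[OF \<gamma>] G null_sets_subset by blast
  qed (use j in \<open>simp add: chain_atom_def\<close>)
qed

lemma Inter_chain_atom_diff_null:
  assumes ch: "is_chain M \<gamma>s \<gamma>" and \<gamma>: "is_partition M \<gamma>" and G: "\<gamma> k \<notin> null_sets M"
  shows "(\<Inter>n. chain_atom M \<gamma>s \<gamma> k n) - \<gamma> k \<in> null_sets M"
proof -
  define D where "D = (\<Inter>n. chain_atom M \<gamma>s \<gamma> k n)"
  note part = chain_partition[OF ch]
  have D: "D \<in> sets M" unfolding D_def using sets_chain_atom[OF ch \<gamma>] by auto
  have Gk: "\<gamma> k \<in> sets M" using partition_sets[OF \<gamma>] .
  have G_minus_D: "\<gamma> k - D \<in> null_sets M"
  proof -
    have "(\<Union>n. \<gamma> k - chain_atom M \<gamma>s \<gamma> k n) \<in> null_sets M"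
      using atom_diff_chain_atom_null[OF ch \<gamma>] by blast
    then show ?thesis by (rule null_sets_subset) (use Gk D in \<open>auto simp: D_def\<close>)
  qed
  obtain S where S: "S \<in> sigma_sets (space M) (\<Union>n. range (\<gamma>s n))"
    and SG: "emeasure M ((S - \<gamma> k) \<union> (\<gamma> k - S)) = 0"
    using ch unfolding is_chain_def by blast
  have S_sets: "S \<in> sets M"
    using S sets.sigma_sets_subset[of "\<Union>n. range (\<gamma>s n)"] partition_sets[OF part] by blast
  have "(S - \<gamma> k) \<union> (\<gamma> k - S) \<in> null_sets M" using SG S_sets Gk by (auto simp: null_sets_def)
  then have S_minus_G: "S - \<gamma> k \<in> null_sets M" and G_minus_S: "\<gamma> k - S \<in> null_sets M"
    by (rule null_sets_subset, use S_sets Gk in auto)+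
  \<comment> \<open>each generator \<open>\<gamma>s n j\<close> either contains \<open>D\<close> or misses it\<close>
  have "D \<inter> S \<in> null_sets M \<or> D - S \<in> null_sets M"
  proof (rule null_or_conull_sigma_sets[OF _ D _ S])
    show "(\<Union>n. range (\<gamma>s n)) \<subseteq> sets M" using partition_sets[OF part] by blast
    fix a assume "a \<in> (\<Union>n. range (\<gamma>s n))"
    then obtain n j where a: "a = \<gamma>s n j" by blast
    then have "D - a = {} \<or> D \<inter> a = {}"
      using chain_atom_disjoint[OF ch \<gamma>, of j n] unfolding D_def chain_atom_def
      by (cases "j = coarse_atom M (\<gamma>s n) \<gamma> k") blast+
    then show "D \<inter> a \<in> null_sets M \<or> D - a \<in> null_sets M" by (metis null_sets.empty_sets)
  qed
  then have "D - \<gamma> k \<in> null_sets M"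
  proof
    assume "D \<inter> S \<in> null_sets M"
    then have "(\<gamma> k - D) \<union> (D \<inter> S) \<union> (\<gamma> k - S) \<in> null_sets M" using G_minus_D G_minus_S by blast
    then have "\<gamma> k \<in> null_sets M" by (rule null_sets_subset) (use Gk in auto)
    then show ?thesis using G by simp
  next
    assume "D - S \<in> null_sets M"
    then have "(D - S) \<union> (S - \<gamma> k) \<in> null_sets M" using S_minus_G by blast
    then show ?thesis by (rule null_sets_subset) (use D Gk in auto)
  qed
  then show ?thesis unfolding D_def .
qed

lemma measure_chain_atom_tendsto:
  assumes ch: "is_chain M \<gamma>s \<gamma>" and \<gamma>: "is_partition M \<gamma>" and pos: "measure M (\<gamma> k) > 0"
  shows "(\<lambda>n. measure M (chain_atom M \<gamma>s \<gamma> k n)) \<longlonglongrightarrow> measure M (\<gamma> k)"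
proof -
  let ?A = "chain_atom M \<gamma>s \<gamma> k"
  have G: "\<gamma> k \<notin> null_sets M" using pos by (auto simp: null_sets_def measure_def)
  have "(\<lambda>n. measure M (?A n)) \<longlonglongrightarrow> measure M (\<Inter>n. ?A n)"
    using sets_chain_atom[OF ch \<gamma>] chain_atom_Suc_diff_null[OF ch \<gamma> G]
    by (rule measure_ae_decseq_tendsto[where A = ?A])
  moreover have "(\<Union>n. \<gamma> k - ?A n) \<union> ((\<Inter>n. ?A n) - \<gamma> k) \<in> null_sets M"
    using atom_diff_chain_atom_null[OF ch \<gamma>] Inter_chain_atom_diff_null[OF ch \<gamma> G] by blast
  then have "measure M (\<Inter>n. ?A n) = measure M (\<gamma> k)"
    by (rule measure_eq_if_diffs_null[rotated 2]) (use sets_chain_atom[OF ch \<gamma>] partition_sets[OF \<gamma>] in auto)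
  ultimately show ?thesis by simp
qed

lemma
  assumes ch: "is_chain M \<gamma>s \<gamma>" and \<gamma>: "is_partition M \<gamma>"
  shows chain_entropy_term_tendsto:
      "(\<lambda>n. measure M (\<gamma> k) * - ln (measure M (chain_atom M \<gamma>s \<gamma> k n)))
        \<longlonglongrightarrow> - measure M (\<gamma> k) * ln (measure M (\<gamma> k))" (is "?a \<longlonglongrightarrow> ?b")
    and chain_entropy_term_bound:
      "\<bar>measure M (\<gamma> k) * - ln (measure M (chain_atom M \<gamma>s \<gamma> k n))\<bar>
        \<le> - measure M (\<gamma> k) * ln (measure M (\<gamma> k))"
proof -
  let ?A = "\<lambda>n. measure M (chain_atom M \<gamma>s \<gamma> k n)"
  consider "measure M (\<gamma> k) = 0" | "measure M (\<gamma> k) > 0" using measure_nonneg[of M "\<gamma> k"] by linarith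
  then have "?a \<longlonglongrightarrow> ?b \<and> \<bar>?a n\<bar> \<le> ?b"
  proof cases
    case 2
    have "(\<lambda>n. ln (?A n)) \<longlonglongrightarrow> ln (measure M (\<gamma> k))"
      by (rule tendsto_ln[OF measure_chain_atom_tendsto[OF ch \<gamma> 2]]) (use 2 in simp)
    from tendsto_mult[OF tendsto_const[of "measure M (\<gamma> k)"] tendsto_minus[OF this]]
    have "?a \<longlonglongrightarrow> ?b" by simp
    moreover have "measure M (\<gamma> k) \<le> ?A n"
      unfolding chain_atom_def
      by (rule measure_le_coarse_atom[OF chain_partition[OF ch] chain_finite_part[OF ch] \<gamma> chain_le_limit[OF ch]])
    then have "ln (measure M (\<gamma> k)) \<le> ln (?A n)" "ln (?A n) \<le> 0" using 2 by auto
    then have "\<bar>?a n\<bar> \<le> ?b" using 2 by (auto intro: mult_left_mono simp: mult_nonneg_nonpos)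
    ultimately show ?thesis ..
  qed simp
  then show "?a \<longlonglongrightarrow> ?b" and "\<bar>?a n\<bar> \<le> ?b" by blast+
qed

lemma part_entropy_chain_tendsto:
  assumes ch: "is_chain M \<gamma>s \<gamma>" and P: "in_P M \<gamma>"
  shows "(\<lambda>n. part_entropy M (\<gamma>s n)) \<longlonglongrightarrow> part_entropy M \<gamma>"
proof -
  have \<gamma>: "is_partition M \<gamma>" using P by (simp add: in_P_def)
  define a where "a k n = measure M (\<gamma> k) * - ln (measure M (chain_atom M \<gamma>s \<gamma> k n))" for k n
  define b where "b k = - measure M (\<gamma> k) * ln (measure M (\<gamma> k))" for k
  have "part_entropy M (\<gamma>s n) = (\<Sum>k. a k n)" for n
    using sums_unique[OF entropy_sums_coarse_atom[OF chain_partition[OF ch] chain_finite_part[OF ch]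
        \<gamma> chain_le_limit[OF ch]]]
    unfolding a_def chain_atom_def by simp
  moreover have "(\<lambda>n. \<Sum>k. a k n) \<longlonglongrightarrow> (\<Sum>k. b k)"
  proof -
    have "summable b" using P unfolding b_def in_P_def by simp
    moreover have "\<forall>\<^sub>F (k, n) in at_top \<times>\<^sub>F sequentially. norm (a k n) \<le> b k"
      using chain_entropy_term_bound[OF ch \<gamma>]
      unfolding a_def b_def by (simp add: always_eventually del: norm_conv_dist)
    ultimately have "(\<lambda>n. \<Sum>k. a k n) \<longlonglongrightarrow> suminf b"
      using tannerys_theorem[where a = a and b = b and M = b and F = sequentially,
          OF chain_entropy_term_tendsto[OF ch \<gamma>, folded a_def b_def]]
      by simp
    then show ?thesis by simp
  qed
  ultimately show ?thesis unfolding b_def part_entropy_def by simp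
qed

end

text \<open>A chain of \<open>\<alpha>\<close> whose \<open>n\<close>-th member refines \<open>\<beta>s n\<close>, when \<open>\<alpha>\<close> refines the limit of \<open>\<beta>s\<close>.\<close>
definition truncated_chain :: "(nat \<Rightarrow> 'x set) \<Rightarrow> (nat \<Rightarrow> nat \<Rightarrow> 'x set) \<Rightarrow> nat \<Rightarrow> nat \<Rightarrow> 'x set" where
  "truncated_chain \<alpha> \<beta>s n i = (if i < n then \<alpha> i else \<beta>s n (i - n) - (\<Union>j<n. \<alpha> j))"

context prob_space begin

lemma truncated_chain_partition:
  assumes \<alpha>: "is_partition M \<alpha>" and \<beta>: "is_partition M (\<beta>s n)"
  shows "is_partition M (truncated_chain \<alpha> \<beta>s n)"
  unfolding is_partition_def
proof (intro conjI allI)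
  show "truncated_chain \<alpha> \<beta>s n i \<in> sets M" for i
    unfolding truncated_chain_def using partition_sets[OF \<alpha>] partition_sets[OF \<beta>]
    by (simp add: sets.Diff sets.finite_UN)
  show "disjoint_family (truncated_chain \<alpha> \<beta>s n)"
    unfolding disjoint_family_on_def
  proof (intro ballI impI)
    fix i i' :: nat assume ii': "i \<noteq> i'"
    note \<alpha>_disj = disjoint_family_onD[OF partition_disjoint[OF \<alpha>] UNIV_I UNIV_I]
    note \<beta>_disj = disjoint_family_onD[OF partition_disjoint[OF \<beta>] UNIV_I UNIV_I]
    show "truncated_chain \<alpha> \<beta>s n i \<inter> truncated_chain \<alpha> \<beta>s n i' = {}"
    proof (cases "i < n \<or> i' < n")
      case True then show ?thesis using \<alpha>_disj[OF ii'] by (auto simp: truncated_chain_def)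
    next
      case False
      then have "\<beta>s n (i - n) \<inter> \<beta>s n (i' - n) = {}" using ii' by (intro \<beta>_disj) linarith
      then show ?thesis using False by (auto simp: truncated_chain_def)
    qed
  qed
  show "(\<Union>i. truncated_chain \<alpha> \<beta>s n i) = space M"
  proof (intro equalityI subsetI)
    fix x assume "x \<in> (\<Union>i. truncated_chain \<alpha> \<beta>s n i)"
    then show "x \<in> space M"
      using partition_subset_space[OF \<alpha>] partition_subset_space[OF \<beta>]
      unfolding truncated_chain_def by (auto split: if_splits)
  next
    fix x assume x: "x \<in> space M"
    show "x \<in> (\<Union>i. truncated_chain \<alpha> \<beta>s n i)"
    proof (cases "x \<in> (\<Union>j<n. \<alpha> j)")
      case True then show ?thesis unfolding truncated_chain_def by force
    next
      case False
      then have "x \<in> truncated_chain \<alpha> \<beta>s n (n + atom_index (\<beta>s n) x)"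
        using partition_atom_index[OF \<beta> x] by (simp add: truncated_chain_def)
      then show ?thesis by blast
    qed
  qed
qed

lemma truncated_chain_finite_part:
  assumes \<beta>: "is_partition M (\<beta>s n)" "finite_part M (\<beta>s n)"
  shows "finite_part M (truncated_chain \<alpha> \<beta>s n)"
  unfolding finite_part_def
proof (intro exI allI impI)
  fix i assume i: "n + part_len M (\<beta>s n) \<le> i"
  have "truncated_chain \<alpha> \<beta>s n i \<subseteq> \<beta>s n (i - n)" using i by (simp add: truncated_chain_def)
  then show "emeasure M (truncated_chain \<alpha> \<beta>s n i) = 0"
    using part_len_emeasure[OF \<beta>(2), of "i - n"] i partition_sets[OF \<beta>(1)]
    by (metis emeasure_eq_0 le_diff_conv2 le_add1 le_trans add.commute)
qed

lemma part_le_truncated_chain: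
  assumes \<alpha>: "is_partition M \<alpha>" and \<beta>: "is_partition M (\<beta>s n)" and le: "part_le M (\<beta>s n) \<alpha>"
  shows "part_le M (\<beta>s n) (truncated_chain \<alpha> \<beta>s n)"
proof (rule part_leI[OF \<beta> truncated_chain_partition[where \<beta>s = \<beta>s, OF \<alpha> \<beta>]])
  fix i
  show "\<exists>k. truncated_chain \<alpha> \<beta>s n i - \<beta>s n k \<in> null_sets M"
  proof (cases "i < n")
    case True
    obtain k where "\<alpha> i - \<beta>s n k \<in> null_sets M" using part_leE[OF le \<beta> \<alpha>] .
    then show ?thesis using True by (auto simp: truncated_chain_def)
  next
    case False
    then have "truncated_chain \<alpha> \<beta>s n i - \<beta>s n (i - n) = {}" by (auto simp: truncated_chain_def)
    then show ?thesis by (metis null_sets.empty_sets)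
  qed
qed

lemma truncated_chain_le_limit:
  assumes \<alpha>: "is_partition M \<alpha>" and \<beta>: "is_partition M (\<beta>s n)" and le: "part_le M (\<beta>s n) \<alpha>"
  shows "part_le M (truncated_chain \<alpha> \<beta>s n) \<alpha>"
proof (rule part_leI[OF truncated_chain_partition[where \<beta>s = \<beta>s, OF \<alpha> \<beta>] \<alpha>])
  fix i
  show "\<exists>k. \<alpha> i - truncated_chain \<alpha> \<beta>s n k \<in> null_sets M"
  proof (cases "i < n")
    case True
    then have "\<alpha> i - truncated_chain \<alpha> \<beta>s n i = {}" by (simp add: truncated_chain_def)
    then show ?thesis by (metis null_sets.empty_sets)
  next
    case False
    obtain k where k: "\<alpha> i - \<beta>s n k \<in> null_sets M" using part_leE[OF le \<beta> \<alpha>] .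
    have "\<alpha> i \<inter> \<alpha> j = {}" if "j < n" for j
      using partition_disjoint[OF \<alpha>] False that unfolding disjoint_family_on_def by auto
    then have "\<alpha> i - truncated_chain \<alpha> \<beta>s n (n + k) = \<alpha> i - \<beta>s n k"
      by (auto simp: truncated_chain_def)
    then show ?thesis using k by metis
  qed
qed

lemma truncated_chain_le_Suc:
  assumes \<alpha>: "is_partition M \<alpha>" and \<beta>: "is_partition M (\<beta>s n)" "is_partition M (\<beta>s (Suc n))"
    and le: "part_le M (\<beta>s n) \<alpha>" and le_Suc: "part_le M (\<beta>s n) (\<beta>s (Suc n))"
  shows "part_le M (truncated_chain \<alpha> \<beta>s n) (truncated_chain \<alpha> \<beta>s (Suc n))"
proof (rule part_leI[OF truncated_chain_partition[where \<beta>s = \<beta>s, OF \<alpha> \<beta>(1)] truncated_chain_partition[where \<beta>s = \<beta>s, OF \<alpha> \<beta>(2)]])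
  fix i
  consider "i < n" | "i = n" | "n < i" by linarith
  then show "\<exists>k. truncated_chain \<alpha> \<beta>s (Suc n) i - truncated_chain \<alpha> \<beta>s n k \<in> null_sets M"
  proof cases
    case 1
    then have "truncated_chain \<alpha> \<beta>s (Suc n) i - truncated_chain \<alpha> \<beta>s n i = {}"
      by (simp add: truncated_chain_def)
    then show ?thesis by (metis null_sets.empty_sets)
  next
    case 2
    obtain k where k: "\<alpha> n - \<beta>s n k \<in> null_sets M" using part_leE[OF le \<beta>(1) \<alpha>] .
    have "\<alpha> n \<inter> \<alpha> j = {}" if "j < n" for j
      using partition_disjoint[OF \<alpha>] that unfolding disjoint_family_on_def by auto
    then have "truncated_chain \<alpha> \<beta>s (Suc n) i - truncated_chain \<alpha> \<beta>s n (n + k) = \<alpha> n - \<beta>s n k"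
      using 2 by (auto simp: truncated_chain_def)
    then show ?thesis using k by metis
  next
    case 3
    obtain k where k: "\<beta>s (Suc n) (i - Suc n) - \<beta>s n k \<in> null_sets M"
      using part_leE[OF le_Suc \<beta>] .
    have "truncated_chain \<alpha> \<beta>s (Suc n) i - truncated_chain \<alpha> \<beta>s n (n + k)
        \<subseteq> \<beta>s (Suc n) (i - Suc n) - \<beta>s n k"
      using 3 by (auto simp: truncated_chain_def)
    moreover have "truncated_chain \<alpha> \<beta>s (Suc n) i - truncated_chain \<alpha> \<beta>s n (n + k) \<in> sets M"
      using truncated_chain_partition[where \<beta>s = \<beta>s, OF \<alpha> \<beta>(1)] truncated_chain_partition[where \<beta>s = \<beta>s, OF \<alpha> \<beta>(2)]
      by (intro sets.Diff partition_sets)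
    ultimately show ?thesis using k null_sets_subset by blast
  qed
qed

lemma is_chain_truncated_chain:
  assumes \<alpha>: "is_partition M \<alpha>" and \<beta>: "is_partition M \<beta>" and le: "part_le M \<beta> \<alpha>"
    and ch: "is_chain M \<beta>s \<beta>"
  shows "is_chain M (truncated_chain \<alpha> \<beta>s) \<alpha>"
proof -
  note part = chain_partition[OF ch]
  have le_n: "part_le M (\<beta>s n) \<alpha>" for n
    by (rule part_le_trans[OF part \<beta> \<alpha> chain_le_limit[OF ch] le])
  have "\<alpha> i = truncated_chain \<alpha> \<beta>s (Suc i) i" for i by (simp add: truncated_chain_def)
  then have "\<exists>S \<in> sigma_sets (space M) (\<Union>n. range (truncated_chain \<alpha> \<beta>s n)).
      emeasure M ((S - \<alpha> i) \<union> (\<alpha> i - S)) = 0" for i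
    by (intro bexI[of _ "\<alpha> i"]) (auto intro!: sigma_sets.Basic)
  then show ?thesis unfolding is_chain_def
    using truncated_chain_partition[where \<beta>s = \<beta>s, OF \<alpha> part] truncated_chain_finite_part[where \<beta>s = \<beta>s, OF part chain_finite_part[OF ch]]
      truncated_chain_le_Suc[where \<beta>s = \<beta>s, OF \<alpha> part part le_n chain_le_Suc[OF ch]] truncated_chain_le_limit[where \<beta>s = \<beta>s, OF \<alpha> part le_n]
    by blast
qed

end

section \<open>Cylinders over a finite window\<close>

locale mp_system_window = mp_system M T for M :: "'x measure" and T :: "'g::group_add \<Rightarrow> 'x \<Rightarrow> 'x" +
  fixes F :: "'g set"
  assumes finite_F: "finite F" and F_nonempty: "F \<noteq> {}"
begin

definition cylinder :: "(nat \<Rightarrow> 'x set) \<Rightarrow> ('g \<Rightarrow> nat) \<Rightarrow> 'x set" where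
  "cylinder \<alpha> \<phi> = space M \<inter> (\<Inter>f\<in>F. T f ` \<alpha> (\<phi> f))"

definition itinerary :: "(nat \<Rightarrow> 'x set) \<Rightarrow> 'x \<Rightarrow> 'g \<Rightarrow> nat" where
  "itinerary \<alpha> x = restrict (\<lambda>f. atom_index \<alpha> (T (- f) x)) F"

definition overflow :: "(nat \<Rightarrow> 'x set) \<Rightarrow> 'x set" where
  "overflow \<alpha> = (\<Union>f\<in>F. T f ` (\<Union>i\<in>{part_len M \<alpha>..}. \<alpha> i))"

lemma mem_image_T_atom_iff:
  assumes \<alpha>: "is_partition M \<alpha>" and x: "x \<in> space M"
  shows "x \<in> T f ` \<alpha> i \<longleftrightarrow> atom_index \<alpha> (T (- f) x) = i"
  using mem_image_T[OF partition_subset_space[OF \<alpha>] x] partition_atom_index_iff[OF \<alpha> T_in_space[OF x]]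
  by simp

lemma cylinder_eq:
  assumes \<alpha>: "is_partition M \<alpha>" and \<phi>: "\<phi> \<in> extensional F"
  shows "cylinder \<alpha> \<phi> = {x\<in>space M. itinerary \<alpha> x = \<phi>}"
proof -
  have itinerary: "itinerary \<alpha> x = \<phi> \<longleftrightarrow> (\<forall>f\<in>F. atom_index \<alpha> (T (- f) x) = \<phi> f)" for x
    using \<phi> unfolding itinerary_def extensional_def fun_eq_iff by auto
  show ?thesis
  proof (intro set_eqI)
    fix x show "x \<in> cylinder \<alpha> \<phi> \<longleftrightarrow> x \<in> {x\<in>space M. itinerary \<alpha> x = \<phi>}"
      by (cases "x \<in> space M") (simp_all add: cylinder_def itinerary mem_image_T_atom_iff[OF \<alpha>])
  qed
qed

lemma sets_cylinder: "is_partition M \<alpha> \<Longrightarrow> cylinder \<alpha> \<phi> \<in> sets M"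
  unfolding cylinder_def using finite_F F_nonempty sets_image_T[OF partition_sets]
  by (intro sets.Int sets.top sets.finite_INT) simp_all

lemma
  assumes \<alpha>: "is_partition M \<alpha>" and S: "finite S" "S \<subseteq> extensional F"
  shows sets_itinerary_in: "{x\<in>space M. itinerary \<alpha> x \<in> S} \<in> sets M"
    and measure_itinerary_in: "measure M {x\<in>space M. itinerary \<alpha> x \<in> S} = (\<Sum>\<phi>\<in>S. measure M (cylinder \<alpha> \<phi>))"
proof -
  have eq: "{x\<in>space M. itinerary \<alpha> x \<in> S} = (\<Union>\<phi>\<in>S. cylinder \<alpha> \<phi>)"
    using cylinder_eq[OF \<alpha>] S(2) by auto
  show "{x\<in>space M. itinerary \<alpha> x \<in> S} \<in> sets M"
    unfolding eq using sets_cylinder[OF \<alpha>] S(1) by (intro sets.finite_UN) auto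
  have "disjoint_family_on (cylinder \<alpha>) S"
    unfolding disjoint_family_on_def
  proof (intro ballI impI)
    fix a b assume "a \<in> S" "b \<in> S" "a \<noteq> b"
    then have "a \<in> extensional F" "b \<in> extensional F" using S(2) by auto
    then show "cylinder \<alpha> a \<inter> cylinder \<alpha> b = {}"
      using cylinder_eq[OF \<alpha>] \<open>a \<noteq> b\<close> by auto
  qed
  then show "measure M {x\<in>space M. itinerary \<alpha> x \<in> S} = (\<Sum>\<phi>\<in>S. measure M (cylinder \<alpha> \<phi>))"
    unfolding eq using S(1) sets_cylinder[OF \<alpha>] by (intro measure_finite_Union) auto
qed

lemma null_sets_overflow:
  assumes \<alpha>: "is_partition M \<alpha>" "finite_part M \<alpha>"
  shows "overflow \<alpha> \<in> null_sets M"
proof -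
  have "(\<Union>i\<in>{part_len M \<alpha>..}. \<alpha> i) \<in> null_sets M"
    using part_len_null_sets[OF \<alpha>] by (intro null_sets_UN') auto
  then show ?thesis unfolding overflow_def using finite_F null_sets_image_T
    by (intro null_sets.finite_UN) auto
qed

lemma itinerary_PiE:
  assumes \<alpha>: "is_partition M \<alpha>" and x: "x \<in> space M" "x \<notin> overflow \<alpha>"
  shows "itinerary \<alpha> x \<in> F \<rightarrow>\<^sub>E {..<part_len M \<alpha>}"
proof -
  have "atom_index \<alpha> (T (- f) x) < part_len M \<alpha>" if f: "f \<in> F" for f
  proof (rule ccontr)
    let ?i = "atom_index \<alpha> (T (- f) x)"
    assume "\<not> ?i < part_len M \<alpha>"
    then have "\<alpha> ?i \<subseteq> (\<Union>i\<in>{part_len M \<alpha>..}. \<alpha> i)" by (intro UN_upper) simp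
    moreover have "x \<in> T f ` \<alpha> ?i" using mem_image_T_atom_iff[OF \<alpha> x(1)] by simp
    ultimately have "x \<in> T f ` (\<Union>i\<in>{part_len M \<alpha>..}. \<alpha> i)" by blast
    then show False using x(2) f unfolding overflow_def by blast
  qed
  then show ?thesis unfolding itinerary_def by auto
qed

lemma finite_PiE_atoms: "finite {\<phi> \<in> F \<rightarrow>\<^sub>E {..<u}. P \<phi>}" for u :: nat
  by (rule finite_subset[of _ "F \<rightarrow>\<^sub>E {..<u}"]) (auto intro: finite_PiE finite_F)

lemma measure_atom_sum_cylinders:
  assumes \<alpha>: "is_partition M \<alpha>" "finite_part M \<alpha>" and f0: "f0 \<in> F"
  shows "measure M (\<alpha> j) = (\<Sum>\<phi>\<in>{\<phi> \<in> F \<rightarrow>\<^sub>E {..<part_len M \<alpha>}. \<phi> f0 = j}. measure M (cylinder \<alpha> \<phi>))"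
proof -
  let ?S = "{\<phi> \<in> F \<rightarrow>\<^sub>E {..<part_len M \<alpha>}. \<phi> f0 = j}"
  have S: "finite ?S" "?S \<subseteq> extensional F" using finite_PiE_atoms by (auto simp: PiE_def)
  have "measure M (\<alpha> j) = measure M (T f0 ` \<alpha> j)"
    using measure_image_T partition_sets[OF \<alpha>(1)] by simp
  also have "\<dots> = measure M {x\<in>space M. itinerary \<alpha> x \<in> ?S}"
  proof (rule measure_eq_if_diffs_null[OF _ sets_itinerary_in[OF \<alpha>(1) S] null_sets_overflow[OF \<alpha>]])
    have "x \<in> T f0 ` \<alpha> j \<longleftrightarrow> itinerary \<alpha> x \<in> ?S" if x: "x \<in> space M" "x \<notin> overflow \<alpha>" for x
    proof -
      have "x \<in> T f0 ` \<alpha> j \<longleftrightarrow> itinerary \<alpha> x f0 = j"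
        using mem_image_T_atom_iff[OF \<alpha>(1) x(1)] f0 by (simp add: itinerary_def)
      then show ?thesis using itinerary_PiE[OF \<alpha>(1) x] by simp
    qed
    moreover have "T f0 ` \<alpha> j \<subseteq> space M"
      using image_T[OF partition_subset_space[OF \<alpha>(1)]] by simp
    ultimately show "T f0 ` \<alpha> j - {x\<in>space M. itinerary \<alpha> x \<in> ?S} \<subseteq> overflow \<alpha>"
      and "{x\<in>space M. itinerary \<alpha> x \<in> ?S} - T f0 ` \<alpha> j \<subseteq> overflow \<alpha>"
      by blast+
  qed (use sets_image_T partition_sets[OF \<alpha>(1)] in simp)
  also have "\<dots> = (\<Sum>\<phi>\<in>?S. measure M (cylinder \<alpha> \<phi>))" using measure_itinerary_in[OF \<alpha>(1) S] .
  finally show ?thesis .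
qed

end

section \<open>Model partitions of \<open>{1..n}\<close>\<close>

locale sofic_model =
  fixes \<sigma> :: "'g \<Rightarrow> nat \<Rightarrow> nat" and n :: nat and F :: "'g set"
  assumes permutes_\<sigma>: "\<And>g. \<sigma> g permutes {1..n}"
begin

definition model_partition :: "nat \<Rightarrow> (nat \<Rightarrow> nat set) \<Rightarrow> bool" where
  "model_partition u B \<longleftrightarrow>
     (\<forall>i. B i \<subseteq> {1..n}) \<and> disjoint_family B \<and> (\<Union>i. B i) = {1..n} \<and> (\<forall>i\<ge>u. B i = {})"

definition model_cylinder :: "(nat \<Rightarrow> nat set) \<Rightarrow> ('g \<Rightarrow> nat) \<Rightarrow> nat set" where
  "model_cylinder B \<phi> = {1..n} \<inter> (\<Inter>f\<in>F. \<sigma> f ` B (\<phi> f))"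

definition model_itinerary :: "(nat \<Rightarrow> nat set) \<Rightarrow> nat \<Rightarrow> 'g \<Rightarrow> nat" where
  "model_itinerary B x = restrict (\<lambda>f. atom_index B (inv (\<sigma> f) x)) F"

lemma mem_image_\<sigma>: "x \<in> \<sigma> f ` A \<longleftrightarrow> inv (\<sigma> f) x \<in> A"
  using permutes_inverses[OF permutes_\<sigma>] by (metis image_iff)

lemma inv_\<sigma>_in: "x \<in> {1..n} \<Longrightarrow> inv (\<sigma> f) x \<in> {1..n}"
  using permutes_in_image[OF permutes_inv[OF permutes_\<sigma>]] by blast

lemma model_partition_atom_index:
  "model_partition u B \<Longrightarrow> x \<in> {1..n} \<Longrightarrow> x \<in> B (atom_index B x)"
  unfolding model_partition_def using atom_index_mem by metis

lemma model_partition_atom_index_eq: "model_partition u B \<Longrightarrow> x \<in> B i \<Longrightarrow> atom_index B x = i"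
  unfolding model_partition_def by (blast intro: atom_index_eq)

lemma model_partition_atom_index_iff:
  "model_partition u B \<Longrightarrow> x \<in> {1..n} \<Longrightarrow> x \<in> B i \<longleftrightarrow> atom_index B x = i"
  using model_partition_atom_index model_partition_atom_index_eq by metis

lemma model_partition_atom_index_less:
  assumes B: "model_partition u B" and x: "x \<in> {1..n}"
  shows "atom_index B x < u"
proof (rule ccontr)
  assume "\<not> atom_index B x < u"
  then have "B (atom_index B x) = {}" using B unfolding model_partition_def by simp
  then show False using model_partition_atom_index[OF B x] by simp
qed

lemma model_partition_eqI:
  assumes "model_partition u B1" "model_partition u B2"
    and "\<And>x. x \<in> {1..n} \<Longrightarrow> atom_index B1 x = atom_index B2 x"
  shows "B1 = B2"
proof
  fix j
  have eq: "B j = {x\<in>{1..n}. atom_index B x = j}" if "model_partition u B" for B :: "nat \<Rightarrow> nat set"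
    using that model_partition_atom_index_iff[OF that] unfolding model_partition_def by blast
  show "B1 j = B2 j" using eq[OF assms(1)] eq[OF assms(2)] assms(3) by auto
qed

lemma inj_on_restrict_atom_index:
  "inj_on (\<lambda>B. restrict (atom_index B) {1..n}) {B. model_partition u B}"
proof (rule inj_onI)
  fix B1 B2 assume B: "B1 \<in> {B. model_partition u B}" "B2 \<in> {B. model_partition u B}"
    and eq: "restrict (atom_index B1) {1..n} = restrict (atom_index B2) {1..n}"
  show "B1 = B2"
  proof (rule model_partition_eqI[of u])
    fix x assume "x \<in> {1..n}"
    then show "atom_index B1 x = atom_index B2 x" using fun_cong[OF eq, of x] by simp
  qed (use B in simp_all)
qed

lemma sum_atom_index:
  fixes h :: "nat \<Rightarrow> 'a::comm_semiring_1"
  assumes B: "model_partition u B"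
  shows "(\<Sum>x\<in>{1..n}. h (atom_index B x)) = (\<Sum>j<u. of_nat (card (B j)) * h j)"
proof -
  have "(\<Sum>x\<in>{1..n}. h (atom_index B x)) = (\<Sum>j<u. \<Sum>x\<in>{x \<in> {1..n}. atom_index B x = j}. h (atom_index B x))"
    by (rule sum.group[symmetric]) (use model_partition_atom_index_less[OF B] in auto)
  also have "\<dots> = (\<Sum>j<u. of_nat (card (B j)) * h j)"
  proof (intro sum.cong refl)
    fix j
    have "{x \<in> {1..n}. atom_index B x = j} = B j"
      using B model_partition_atom_index_iff[OF B] unfolding model_partition_def by blast
    moreover have "(\<Sum>x\<in>B j. h (atom_index B x)) = (\<Sum>x\<in>B j. h j)"
      using model_partition_atom_index_eq[OF B] by (intro sum.cong) auto
    ultimately show "(\<Sum>x\<in>{x \<in> {1..n}. atom_index B x = j}. h (atom_index B x)) = of_nat (card (B j)) * h j"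
      by simp
  qed
  finally show ?thesis .
qed

lemma finite_model_partitions: "finite {B. model_partition u B}"
proof -
  have "{B. model_partition u B} \<subseteq> (\<lambda>g i. if i < u then g i else {}) ` ({..<u} \<rightarrow>\<^sub>E Pow {1..n})"
  proof
    fix B assume "B \<in> {B. model_partition u B}"
    then have B: "model_partition u B" by simp
    have "B = (\<lambda>i. if i < u then restrict B {..<u} i else {})"
      using B unfolding model_partition_def by (auto simp: fun_eq_iff)
    moreover have "restrict B {..<u} \<in> {..<u} \<rightarrow>\<^sub>E Pow {1..n}"
      using B unfolding model_partition_def by auto
    ultimately show "B \<in> (\<lambda>g i. if i < u then g i else {}) ` ({..<u} \<rightarrow>\<^sub>E Pow {1..n})"
      by (rule image_eqI)
  qed
  then show ?thesis by (rule finite_subset) (auto intro: finite_PiE)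
qed

lemma model_cylinder_eq:
  assumes B: "model_partition u B" and \<phi>: "\<phi> \<in> extensional F"
  shows "model_cylinder B \<phi> = {x\<in>{1..n}. model_itinerary B x = \<phi>}"
proof -
  have itinerary: "model_itinerary B x = \<phi> \<longleftrightarrow> (\<forall>f\<in>F. atom_index B (inv (\<sigma> f) x) = \<phi> f)" for x
    using \<phi> unfolding model_itinerary_def extensional_def fun_eq_iff by auto
  have "x \<in> \<sigma> f ` B i \<longleftrightarrow> atom_index B (inv (\<sigma> f) x) = i" if "x \<in> {1..n}" for x f i
    using mem_image_\<sigma> model_partition_atom_index_iff[OF B inv_\<sigma>_in[OF that]] by simp
  then show ?thesis unfolding model_cylinder_def itinerary by auto
qed

lemma model_itinerary_PiE:
  assumes B: "model_partition u B" and x: "x \<in> {1..n}"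
  shows "model_itinerary B x \<in> F \<rightarrow>\<^sub>E {..<u}"
  unfolding model_itinerary_def using model_partition_atom_index_less[OF B inv_\<sigma>_in[OF x]] by auto

lemma card_model_itinerary_in:
  assumes B: "model_partition u B" and S: "finite S" "S \<subseteq> extensional F"
  shows "card {x\<in>{1..n}. model_itinerary B x \<in> S} = (\<Sum>\<phi>\<in>S. card (model_cylinder B \<phi>))"
proof -
  have eq: "{x\<in>{1..n}. model_itinerary B x \<in> S} = (\<Union>\<phi>\<in>S. model_cylinder B \<phi>)"
    using model_cylinder_eq[OF B] S(2) by auto
  have "card (\<Union>\<phi>\<in>S. model_cylinder B \<phi>) = (\<Sum>\<phi>\<in>S. card (model_cylinder B \<phi>))"
  proof (rule card_UN_disjoint)
    show "\<forall>a\<in>S. \<forall>b\<in>S. a \<noteq> b \<longrightarrow> model_cylinder B a \<inter> model_cylinder B b = {}"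
    proof (intro ballI impI)
      fix a b assume "a \<in> S" "b \<in> S" "a \<noteq> b"
      then have "a \<in> extensional F" "b \<in> extensional F" using S(2) by auto
      then show "model_cylinder B a \<inter> model_cylinder B b = {}"
        using model_cylinder_eq[OF B] \<open>a \<noteq> b\<close> by auto
    qed
  qed (use S in \<open>auto simp: model_cylinder_def\<close>)
  then show ?thesis unfolding eq .
qed

lemma card_atom_sum_model_cylinders:
  assumes B: "model_partition u B" and F: "finite F" and f0: "f0 \<in> F"
  shows "card (B j) = (\<Sum>\<phi>\<in>{\<phi> \<in> F \<rightarrow>\<^sub>E {..<u}. \<phi> f0 = j}. card (model_cylinder B \<phi>))"
proof -
  let ?S = "{\<phi> \<in> F \<rightarrow>\<^sub>E {..<u}. \<phi> f0 = j}"
  have "finite ?S" by (rule finite_subset[of _ "F \<rightarrow>\<^sub>E {..<u}"]) (auto intro: finite_PiE F)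
  moreover have "?S \<subseteq> extensional F" by (auto simp: PiE_def)
  ultimately have S: "finite ?S" "?S \<subseteq> extensional F" .
  have "card (B j) = card (\<sigma> f0 ` B j)"
    using card_image[OF permutes_inj_on[OF permutes_\<sigma>]] by simp
  also have "\<sigma> f0 ` B j = {x\<in>{1..n}. model_itinerary B x \<in> ?S}"
  proof (intro set_eqI)
    fix x
    show "x \<in> \<sigma> f0 ` B j \<longleftrightarrow> x \<in> {x\<in>{1..n}. model_itinerary B x \<in> ?S}"
    proof (cases "x \<in> {1..n}")
      case True
      then have "x \<in> \<sigma> f0 ` B j \<longleftrightarrow> model_itinerary B x f0 = j"
        using mem_image_\<sigma> model_partition_atom_index_iff[OF B inv_\<sigma>_in[OF True]] f0
        by (simp add: model_itinerary_def)
      then show ?thesis using model_itinerary_PiE[OF B True] True by simp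
    next
      case False
      have "B j \<subseteq> {1..n}" using B unfolding model_partition_def by blast
      then have "\<sigma> f0 ` B j \<subseteq> {1..n}"
        using image_mono permutes_image[OF permutes_\<sigma>] by metis
      then show ?thesis using False by auto
    qed
  qed
  also have "card \<dots> = (\<Sum>\<phi>\<in>?S. card (model_cylinder B \<phi>))" using card_model_itinerary_in[OF B S] .
  finally show ?thesis .
qed

text \<open>The model counterpart of passing from a partition to a coarser one.\<close>
definition coarsen :: "(nat \<Rightarrow> nat) \<Rightarrow> nat \<Rightarrow> (nat \<Rightarrow> nat set) \<Rightarrow> nat \<Rightarrow> nat set" where
  "coarsen c u B k = (\<Union>j\<in>{j. j < u \<and> c j = k}. B j)"

lemma
  assumes B: "model_partition u B" and x: "x \<in> {1..n}"
  shows mem_coarsen_atom_index: "x \<in> coarsen c u B (c (atom_index B x))"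
    and mem_coarsen_iff: "x \<in> coarsen c u B k \<longleftrightarrow> c (atom_index B x) = k"
proof -
  show mem: "x \<in> coarsen c u B (c (atom_index B x))"
    using model_partition_atom_index[OF B x] model_partition_atom_index_less[OF B x]
    unfolding coarsen_def by blast
  show "x \<in> coarsen c u B k \<longleftrightarrow> c (atom_index B x) = k"
    using mem model_partition_atom_index_eq[OF B] unfolding coarsen_def by blast
qed

lemma model_partition_coarsen:
  assumes B: "model_partition u B" and c: "c ` {..<u} \<subseteq> {..<u'}"
  shows "model_partition u' (coarsen c u B)"
  unfolding model_partition_def
proof (intro conjI allI impI)
  show sub: "coarsen c u B i \<subseteq> {1..n}" for i using B unfolding model_partition_def coarsen_def by blast
  note mem_iff = mem_coarsen_iff[OF B]
  show "disjoint_family (coarsen c u B)"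
    unfolding disjoint_family_on_def
  proof (intro ballI impI equalityI subsetI)
    fix a b x assume "a \<noteq> b" and x: "x \<in> coarsen c u B a \<inter> coarsen c u B b"
    then have "x \<in> {1..n}" using sub by blast
    then show "x \<in> {}" using x mem_iff[OF \<open>x \<in> {1..n}\<close>] \<open>a \<noteq> b\<close> by simp
  qed simp
  show "(\<Union>i. coarsen c u B i) = {1..n}"
  proof (intro equalityI subsetI)
    fix x assume "x \<in> {1..n}"
    then show "x \<in> (\<Union>i. coarsen c u B i)"
      using mem_coarsen_atom_index[OF B] by blast
  qed (use sub in blast)
  show "coarsen c u B i = {}" if "u' \<le> i" for i
    using that c unfolding coarsen_def by fastforce
qed

lemma atom_index_coarsen:
  assumes B: "model_partition u B" and c: "c ` {..<u} \<subseteq> {..<u'}" and x: "x \<in> {1..n}"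
  shows "atom_index (coarsen c u B) x = c (atom_index B x)"
  using model_partition_coarsen[OF B c] mem_coarsen_atom_index[OF B x]
  by (rule model_partition_atom_index_eq)

lemma model_cylinder_coarsen:
  assumes B: "model_partition u B" and c: "c ` {..<u} \<subseteq> {..<u'}" and \<psi>: "\<psi> \<in> extensional F"
  shows "model_cylinder (coarsen c u B) \<psi>
    = {x\<in>{1..n}. model_itinerary B x \<in> {\<phi> \<in> F \<rightarrow>\<^sub>E {..<u}. restrict (c \<circ> \<phi>) F = \<psi>}}"
proof -
  have "model_cylinder (coarsen c u B) \<psi> = {x\<in>{1..n}. model_itinerary (coarsen c u B) x = \<psi>}"
    using model_partition_coarsen[OF B c] \<psi> by (rule model_cylinder_eq)
  also have "\<dots> = {x\<in>{1..n}. model_itinerary B x \<in> {\<phi> \<in> F \<rightarrow>\<^sub>E {..<u}. restrict (c \<circ> \<phi>) F = \<psi>}}"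
  proof (intro Collect_cong conj_cong refl)
    fix x assume x: "x \<in> {1..n}"
    have "model_itinerary (coarsen c u B) x = restrict (c \<circ> model_itinerary B x) F"
      unfolding model_itinerary_def using atom_index_coarsen[OF B c inv_\<sigma>_in[OF x]] by auto
    then show "model_itinerary (coarsen c u B) x = \<psi>
        \<longleftrightarrow> model_itinerary B x \<in> {\<phi> \<in> F \<rightarrow>\<^sub>E {..<u}. restrict (c \<circ> \<phi>) F = \<psi>}"
      using model_itinerary_PiE[OF B x] by simp
  qed
  finally show ?thesis .
qed

end

section \<open>Counting models of a refinement\<close>

locale refinement = mp_system_window M T F for M :: "'x measure" and T :: "'g::group_add \<Rightarrow> 'x \<Rightarrow> 'x" and F +
  fixes \<gamma> \<delta> :: "nat \<Rightarrow> 'x set"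
  assumes \<gamma>: "is_partition M \<gamma>" "finite_part M \<gamma>"
    and \<delta>: "is_partition M \<delta>" "finite_part M \<delta>"
    and refines: "part_le M \<gamma> \<delta>"
begin

abbreviation "u\<gamma> \<equiv> part_len M \<gamma>"
abbreviation "u\<delta> \<equiv> part_len M \<delta>"
abbreviation "c \<equiv> coarse_atom M \<gamma> \<delta>"

lemma c_less: "c j < u\<gamma>"
  using coarse_atom_less[OF \<gamma> \<delta>(1) refines] .

lemma c_image: "c ` {..<u\<delta>} \<subseteq> {..<u\<gamma>}"
  using c_less by auto

definition atoms_over :: "nat \<Rightarrow> nat set" where
  "atoms_over k = {j \<in> {..<u\<delta>}. c j = k}"

lemma finite_atoms_over: "finite (atoms_over k)"
  unfolding atoms_over_def by auto

lemma measure_eq_sum_atoms_over: "measure M (\<gamma> k) = (\<Sum>j\<in>atoms_over k. measure M (\<delta> j))"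
proof -
  have "measure M (\<gamma> k) = (\<Sum>j. if c j = k then measure M (\<delta> j) else 0)"
    using sums_unique[OF coarse_atom_sums[OF \<gamma> \<delta>(1) refines]] .
  also have "\<dots> = (\<Sum>j<u\<delta>. if c j = k then measure M (\<delta> j) else 0)"
    by (rule suminf_finite) (auto simp: part_len_measure[OF \<delta>(2)])
  also have "\<dots> = (\<Sum>j\<in>atoms_over k. measure M (\<delta> j))"
    unfolding atoms_over_def by (simp add: sum.inter_filter[symmetric] lessThan_def)
  finally show ?thesis .
qed

definition misfit :: "'x set" where
  "misfit = (\<Union>f\<in>F. T f ` (\<Union>j. \<delta> j - \<gamma> (c j)))"

lemma null_sets_misfit: "misfit \<in> null_sets M"
proof -
  have "(\<Union>j. \<delta> j - \<gamma> (c j)) \<in> null_sets M"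
    using coarse_atom_null[OF \<gamma> \<delta>(1) refines] by (rule null_sets_UN)
  then show ?thesis unfolding misfit_def using finite_F null_sets_image_T
    by (intro null_sets.finite_UN) auto
qed

lemma itinerary_coarse:
  assumes x: "x \<in> space M" "x \<notin> misfit"
  shows "itinerary \<gamma> x = restrict (c \<circ> itinerary \<delta> x) F"
proof -
  have "atom_index \<gamma> (T (- f) x) = c (atom_index \<delta> (T (- f) x))" if f: "f \<in> F" for f
  proof -
    let ?y = "T (- f) x"
    have "?y \<notin> (\<Union>j. \<delta> j - \<gamma> (c j))"
    proof
      assume "?y \<in> (\<Union>j. \<delta> j - \<gamma> (c j))"
      then have "T f ?y \<in> T f ` (\<Union>j. \<delta> j - \<gamma> (c j))" by (rule imageI)
      then show False using x f T_T_uminus[OF x(1)] unfolding misfit_def by auto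
    qed
    then have "?y \<in> \<gamma> (c (atom_index \<delta> ?y))"
      using partition_atom_index[OF \<delta>(1) T_in_space[OF x(1)]] by blast
    then show ?thesis by (rule partition_atom_index_eq[OF \<gamma>(1)])
  qed
  then show ?thesis unfolding itinerary_def by auto
qed

definition fiber :: "('g \<Rightarrow> nat) \<Rightarrow> ('g \<Rightarrow> nat) set" where
  "fiber \<psi> = {\<phi> \<in> F \<rightarrow>\<^sub>E {..<u\<delta>}. restrict (c \<circ> \<phi>) F = \<psi>}"

lemma finite_fiber: "finite (fiber \<psi>)" and fiber_extensional: "fiber \<psi> \<subseteq> extensional F"
  unfolding fiber_def using finite_PiE_atoms by (auto simp: PiE_def)

lemma measure_cylinder_coarse:
  assumes \<psi>: "\<psi> \<in> extensional F"
  shows "measure M (cylinder \<gamma> \<psi>) = (\<Sum>\<phi>\<in>fiber \<psi>. measure M (cylinder \<delta> \<phi>))"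
proof -
  have N: "misfit \<union> overflow \<delta> \<in> null_sets M" using null_sets_misfit null_sets_overflow[OF \<delta>] by auto
  have "measure M (cylinder \<gamma> \<psi>) = measure M {x\<in>space M. itinerary \<delta> x \<in> fiber \<psi>}"
  proof (rule measure_eq_if_diffs_null[OF sets_cylinder[OF \<gamma>(1)] sets_itinerary_in[OF \<delta>(1) finite_fiber fiber_extensional] N])
    have "x \<in> cylinder \<gamma> \<psi> \<longleftrightarrow> itinerary \<delta> x \<in> fiber \<psi>"
      if x: "x \<in> space M" "x \<notin> misfit" "x \<notin> overflow \<delta>" for x
      using cylinder_eq[OF \<gamma>(1) \<psi>] itinerary_coarse[OF x(1,2)] itinerary_PiE[OF \<delta>(1) x(1,3)] x(1)
      unfolding fiber_def by simp
    moreover have "cylinder \<gamma> \<psi> \<subseteq> space M" unfolding cylinder_def by blast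
    ultimately show "cylinder \<gamma> \<psi> - {x\<in>space M. itinerary \<delta> x \<in> fiber \<psi>} \<subseteq> misfit \<union> overflow \<delta>"
      and "{x\<in>space M. itinerary \<delta> x \<in> fiber \<psi>} - cylinder \<gamma> \<psi> \<subseteq> misfit \<union> overflow \<delta>"
      by blast+
  qed
  also have "\<dots> = (\<Sum>\<phi>\<in>fiber \<psi>. measure M (cylinder \<delta> \<phi>))"
    using measure_itinerary_in[OF \<delta>(1) finite_fiber fiber_extensional] .
  finally show ?thesis .
qed

lemma part_entropy_diff:
  "part_entropy M \<delta> - part_entropy M \<gamma>
     = (\<Sum>j<u\<delta>. measure M (\<delta> j) * - ln (measure M (\<delta> j) / measure M (\<gamma> (c j))))"
proof -
  have "(\<Sum>j<u\<delta>. measure M (\<delta> j) * ln (measure M (\<gamma> (c j))))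
      = (\<Sum>k<u\<gamma>. \<Sum>j\<in>atoms_over k. measure M (\<delta> j) * ln (measure M (\<gamma> (c j))))"
    unfolding atoms_over_def by (rule sum.group[symmetric]) (use c_less in auto)
  also have "\<dots> = (\<Sum>k<u\<gamma>. measure M (\<gamma> k) * ln (measure M (\<gamma> k)))"
    by (intro sum.cong refl)
       (simp add: measure_eq_sum_atoms_over sum_distrib_right atoms_over_def)
  finally have "(\<Sum>j<u\<delta>. measure M (\<delta> j) * ln (measure M (\<gamma> (c j)))) = - part_entropy M \<gamma>"
    by (simp add: part_entropy_finite_part[OF \<gamma>(2)] sum_negf)
  moreover have "measure M (\<delta> j) * - ln (measure M (\<delta> j) / measure M (\<gamma> (c j)))
      = - measure M (\<delta> j) * ln (measure M (\<delta> j)) + measure M (\<delta> j) * ln (measure M (\<gamma> (c j)))" for j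
  proof (cases "measure M (\<delta> j) = 0")
    case False
    then have "0 < measure M (\<delta> j)" "0 < measure M (\<gamma> (c j))"
      using measure_le_coarse_atom[OF \<gamma> \<delta>(1) refines, of j] measure_nonneg[of M "\<delta> j"] by linarith+
    then show ?thesis by (simp add: ln_div algebra_simps)
  qed simp
  ultimately show ?thesis
    by (simp add: sum_subtractf part_entropy_finite_part[OF \<delta>(2)] sum_negf)
qed

text \<open>The conditional probabilities \<open>\<mu>(\<delta> j) / \<mu>(\<gamma> (c j))\<close>, regularised by \<open>\<eta>\<close> so that they
  stay positive.\<close>
definition weight :: "real \<Rightarrow> nat \<Rightarrow> real" where
  "weight \<eta> j = (measure M (\<delta> j) + \<eta>) / (measure M (\<gamma> (c j)) + \<eta> * card (atoms_over (c j)))"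

lemma weight_pos:
  assumes "\<eta> > 0" "j < u\<delta>"
  shows "weight \<eta> j > 0"
proof -
  have "j \<in> atoms_over (c j)" using assms(2) by (simp add: atoms_over_def)
  then have "card (atoms_over (c j)) > 0" using finite_atoms_over card_gt_0_iff by blast
  then show ?thesis unfolding weight_def using assms(1) by (simp add: add_nonneg_pos)
qed

lemma sum_weight_atoms_over:
  assumes "\<eta> > 0" "atoms_over k \<noteq> {}"
  shows "(\<Sum>j\<in>atoms_over k. weight \<eta> j) = 1"
proof -
  let ?D = "measure M (\<gamma> k) + \<eta> * card (atoms_over k)"
  have "?D > 0" using assms finite_atoms_over by (simp add: add_nonneg_pos card_gt_0_iff)
  moreover have "(\<Sum>j\<in>atoms_over k. weight \<eta> j) = (\<Sum>j\<in>atoms_over k. measure M (\<delta> j) + \<eta>) / ?D"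
    unfolding sum_divide_distrib by (intro sum.cong refl) (simp add: weight_def atoms_over_def)
  moreover have "(\<Sum>j\<in>atoms_over k. measure M (\<delta> j) + \<eta>) = ?D"
    by (simp add: sum.distrib measure_eq_sum_atoms_over mult.commute)
  ultimately show ?thesis by simp
qed

definition cond_entropy_approx :: "real \<Rightarrow> real" where
  "cond_entropy_approx \<eta> = (\<Sum>j<u\<delta>. measure M (\<delta> j) * - ln (weight \<eta> j))"

definition log_weight_bound :: "real \<Rightarrow> real" where
  "log_weight_bound \<eta> = (\<Sum>j<u\<delta>. \<bar>ln (weight \<eta> j)\<bar>)"

lemma cond_entropy_approx_tendsto:
  "(cond_entropy_approx \<longlongrightarrow> part_entropy M \<delta> - part_entropy M \<gamma>) (at_right 0)"
  unfolding part_entropy_diff cond_entropy_approx_def[abs_def]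
proof (intro tendsto_sum)
  fix j
  show "((\<lambda>\<eta>. measure M (\<delta> j) * - ln (weight \<eta> j))
      \<longlongrightarrow> measure M (\<delta> j) * - ln (measure M (\<delta> j) / measure M (\<gamma> (c j)))) (at_right 0)"
  proof (cases "measure M (\<delta> j) = 0")
    case False
    then have pos: "0 < measure M (\<delta> j)" "0 < measure M (\<gamma> (c j))"
      using measure_le_coarse_atom[OF \<gamma> \<delta>(1) refines, of j] measure_nonneg[of M "\<delta> j"] by linarith+
    have "((\<lambda>\<eta>. weight \<eta> j) \<longlongrightarrow> (measure M (\<delta> j) + 0) / (measure M (\<gamma> (c j)) + 0 * card (atoms_over (c j))))
        (at_right 0)"
      unfolding weight_def[abs_def] using pos
      by (intro tendsto_intros tendsto_ident_at) (auto intro!: tendsto_mult_left_zero tendsto_ident_at)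
    then have "((\<lambda>\<eta>. ln (weight \<eta> j)) \<longlongrightarrow> ln (measure M (\<delta> j) / measure M (\<gamma> (c j)))) (at_right 0)"
      using pos by (intro tendsto_ln) auto
    from tendsto_mult[OF tendsto_const[of "measure M (\<delta> j)"] tendsto_minus[OF this]]
    show ?thesis by simp
  qed simp
qed

end

locale window_model = mp_system_window M T F + sofic_model \<sigma> n F
  for M :: "'x measure" and T :: "'g::group_add \<Rightarrow> 'x \<Rightarrow> 'x" and F \<sigma> n
begin

lemma AP_eq: "AP M T F \<alpha> \<sigma> n \<epsilon> = {B. model_partition (part_len M \<alpha>) B \<and> dF M T F \<alpha> \<sigma> n B \<le> \<epsilon>}"
  unfolding AP_def model_partition_def by auto

lemma finite_AP: "finite (AP M T F \<alpha> \<sigma> n \<epsilon>)"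
  unfolding AP_eq by (rule finite_subset[OF _ finite_model_partitions]) auto

lemma dF_eq_sum:
  assumes \<alpha>: "is_partition M \<alpha>" "finite_part M \<alpha>" and B: "model_partition (part_len M \<alpha>) B"
  shows "dF M T F \<alpha> \<sigma> n B = (\<Sum>\<phi> \<in> F \<rightarrow>\<^sub>E {..<part_len M \<alpha>}.
    \<bar>measure M (cylinder \<alpha> \<phi>) - card (model_cylinder B \<phi>) / n\<bar>)"
proof -
  let ?g = "\<lambda>\<phi>. \<bar>measure M (cylinder \<alpha> \<phi>) - card (model_cylinder B \<phi>) / n\<bar>"
  have "dF M T F \<alpha> \<sigma> n B = infsum ?g (F \<rightarrow>\<^sub>E UNIV)"
    unfolding dF_def cylinder_def model_cylinder_def by simp
  also have "\<dots> = infsum ?g (F \<rightarrow>\<^sub>E {..<part_len M \<alpha>})"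
  proof (rule infsum_cong_neutral)
    fix \<phi> assume "\<phi> \<in> (F \<rightarrow>\<^sub>E UNIV) - (F \<rightarrow>\<^sub>E {..<part_len M \<alpha>})"
    then obtain f where f: "f \<in> F" "part_len M \<alpha> \<le> \<phi> f" by (auto simp: PiE_def Pi_def not_less)
    have "cylinder \<alpha> \<phi> \<subseteq> T f ` \<alpha> (\<phi> f)" using f(1) unfolding cylinder_def by blast
    moreover have "T f ` \<alpha> (\<phi> f) \<in> null_sets M"
      using null_sets_image_T part_len_null_sets[OF \<alpha> f(2)] by blast
    ultimately have "measure M (cylinder \<alpha> \<phi>) = 0"
      using sets_cylinder[OF \<alpha>(1)] null_sets_subset by (metis measure_eq_0_null_sets)
    moreover have "model_cylinder B \<phi> = {}"
      using B f unfolding model_partition_def model_cylinder_def by blast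
    ultimately show "?g \<phi> = 0" by simp
  qed auto
  also have "\<dots> = (\<Sum>\<phi> \<in> F \<rightarrow>\<^sub>E {..<part_len M \<alpha>}. ?g \<phi>)"
    by (rule infsum_finite) (auto intro: finite_PiE finite_F)
  finally show ?thesis .
qed

lemma sum_atom_deviation_le_dF:
  assumes \<alpha>: "is_partition M \<alpha>" "finite_part M \<alpha>" and B: "model_partition (part_len M \<alpha>) B"
  shows "(\<Sum>j<part_len M \<alpha>. \<bar>card (B j) / n - measure M (\<alpha> j)\<bar>) \<le> dF M T F \<alpha> \<sigma> n B"
proof -
  let ?u = "part_len M \<alpha>"
  let ?h = "\<lambda>\<phi>. measure M (cylinder \<alpha> \<phi>) - card (model_cylinder B \<phi>) / n"
  obtain f0 where f0: "f0 \<in> F" using F_nonempty by blast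
  let ?S = "\<lambda>j. {\<phi> \<in> F \<rightarrow>\<^sub>E {..<?u}. \<phi> f0 = j}"
  have "\<bar>card (B j) / n - measure M (\<alpha> j)\<bar> = \<bar>\<Sum>\<phi>\<in>?S j. ?h \<phi>\<bar>" for j
    using measure_atom_sum_cylinders[OF \<alpha> f0, of j] card_atom_sum_model_cylinders[OF B finite_F f0, of j]
    by (simp add: sum_subtractf sum_divide_distrib abs_minus_commute)
  then have "(\<Sum>j<?u. \<bar>card (B j) / n - measure M (\<alpha> j)\<bar>) \<le> (\<Sum>j<?u. \<Sum>\<phi>\<in>?S j. \<bar>?h \<phi>\<bar>)"
    by (simp add: sum_mono sum_abs)
  also have "\<dots> = (\<Sum>\<phi> \<in> F \<rightarrow>\<^sub>E {..<?u}. \<bar>?h \<phi>\<bar>)"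
    by (rule sum.group) (use f0 in \<open>auto intro: finite_PiE finite_F\<close>)
  also have "\<dots> = dF M T F \<alpha> \<sigma> n B" using dF_eq_sum[OF \<alpha> B] by simp
  finally show ?thesis .
qed

end

locale refinement_model = refinement M T F \<gamma> \<delta> + window_model M T F \<sigma> n
  for M :: "'x measure" and T :: "'g::group_add \<Rightarrow> 'x \<Rightarrow> 'x" and F \<gamma> \<delta> \<sigma> n
begin

lemma dF_coarsen_le:
  assumes B: "model_partition u\<delta> B"
  shows "dF M T F \<gamma> \<sigma> n (coarsen c u\<delta> B) \<le> dF M T F \<delta> \<sigma> n B"
proof -
  let ?h = "\<lambda>\<phi>. measure M (cylinder \<delta> \<phi>) - card (model_cylinder B \<phi>) / n"
  have B': "model_partition u\<gamma> (coarsen c u\<delta> B)" by (rule model_partition_coarsen[OF B c_image])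
  have "measure M (cylinder \<gamma> \<psi>) - card (model_cylinder (coarsen c u\<delta> B) \<psi>) / n = (\<Sum>\<phi>\<in>fiber \<psi>. ?h \<phi>)"
    if "\<psi> \<in> extensional F" for \<psi>
    using measure_cylinder_coarse[OF that] model_cylinder_coarsen[OF B c_image that]
      card_model_itinerary_in[OF B finite_fiber fiber_extensional]
    by (simp add: fiber_def sum_subtractf sum_divide_distrib)
  then have "dF M T F \<gamma> \<sigma> n (coarsen c u\<delta> B) = (\<Sum>\<psi> \<in> F \<rightarrow>\<^sub>E {..<u\<gamma>}. \<bar>\<Sum>\<phi>\<in>fiber \<psi>. ?h \<phi>\<bar>)"
    unfolding dF_eq_sum[OF \<gamma> B'] by (intro sum.cong refl) (simp add: PiE_def)
  also have "\<dots> \<le> (\<Sum>\<psi> \<in> F \<rightarrow>\<^sub>E {..<u\<gamma>}. \<Sum>\<phi>\<in>fiber \<psi>. \<bar>?h \<phi>\<bar>)"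
    by (intro sum_mono sum_abs)
  also have "\<dots> = (\<Sum>\<phi> \<in> F \<rightarrow>\<^sub>E {..<u\<delta>}. \<bar>?h \<phi>\<bar>)"
    unfolding fiber_def using c_less
    by (intro sum.group) (auto intro: finite_PiE finite_F)
  also have "\<dots> = dF M T F \<delta> \<sigma> n B" using dF_eq_sum[OF \<delta> B] by simp
  finally show ?thesis .
qed

lemma weighted_log_bound:
  assumes \<eta>: "\<eta> > 0" and B: "model_partition u\<delta> B" and dF: "dF M T F \<delta> \<sigma> n B \<le> \<epsilon>"
  shows "(\<Sum>x\<in>{1..n}. - ln (weight \<eta> (atom_index B x)))
    \<le> n * (cond_entropy_approx \<eta> + \<epsilon> * log_weight_bound \<eta>)"
proof -
  have "(\<Sum>x\<in>{1..n}. - ln (weight \<eta> (atom_index B x))) = (\<Sum>j<u\<delta>. card (B j) * - ln (weight \<eta> j))"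
    by (rule sum_atom_index[OF B])
  also have "\<dots> \<le> n * (cond_entropy_approx \<eta> + \<epsilon> * log_weight_bound \<eta>)"
  proof (cases "n = 0")
    case True
    then have "B j = {}" for j using B unfolding model_partition_def by auto
    then show ?thesis using True by simp
  next
    case False
    let ?d = "\<lambda>j. card (B j) / n - measure M (\<delta> j)"
    have "?d j * - ln (weight \<eta> j) \<le> \<bar>?d j\<bar> * log_weight_bound \<eta>" if "j < u\<delta>" for j
    proof -
      have "?d j * - ln (weight \<eta> j) \<le> \<bar>?d j\<bar> * \<bar>ln (weight \<eta> j)\<bar>"
        by (metis abs_ge_self abs_minus abs_mult)
      also have "\<bar>ln (weight \<eta> j)\<bar> \<le> log_weight_bound \<eta>"
        unfolding log_weight_bound_def using that by (intro member_le_sum) auto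
      finally show ?thesis by (simp add: mult_left_mono)
    qed
    then have "(\<Sum>j<u\<delta>. ?d j * - ln (weight \<eta> j)) \<le> (\<Sum>j<u\<delta>. \<bar>?d j\<bar> * log_weight_bound \<eta>)"
      by (intro sum_mono) simp
    also have "\<dots> = (\<Sum>j<u\<delta>. \<bar>?d j\<bar>) * log_weight_bound \<eta>"
      by (rule sum_distrib_right[symmetric])
    also have "\<dots> \<le> \<epsilon> * log_weight_bound \<eta>"
      using sum_atom_deviation_le_dF[OF \<delta> B] dF
      by (intro mult_right_mono) (auto simp: log_weight_bound_def)
    finally have "(\<Sum>j<u\<delta>. card (B j) / n * - ln (weight \<eta> j))
        \<le> cond_entropy_approx \<eta> + \<epsilon> * log_weight_bound \<eta>"
      unfolding cond_entropy_approx_def by (simp add: algebra_simps sum_subtractf sum_negf)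
    then have "n * (\<Sum>j<u\<delta>. card (B j) / n * - ln (weight \<eta> j))
        \<le> n * (cond_entropy_approx \<eta> + \<epsilon> * log_weight_bound \<eta>)"
      by (rule mult_left_mono) simp
    moreover have "n * (\<Sum>j<u\<delta>. card (B j) / n * - ln (weight \<eta> j))
        = (\<Sum>j<u\<delta>. card (B j) * - ln (weight \<eta> j))"
      using False by (simp add: sum_distrib_left)
    ultimately show ?thesis by simp
  qed
  finally show ?thesis .
qed

lemma prod_weight_ge:
  assumes \<eta>: "\<eta> > 0" and B: "model_partition u\<delta> B" and dF: "dF M T F \<delta> \<sigma> n B \<le> \<epsilon>"
  shows "exp (- (n * (cond_entropy_approx \<eta> + \<epsilon> * log_weight_bound \<eta>)))
    \<le> (\<Prod>x\<in>{1..n}. weight \<eta> (atom_index B x))"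
proof -
  have "(\<Prod>x\<in>{1..n}. weight \<eta> (atom_index B x)) = exp (\<Sum>x\<in>{1..n}. ln (weight \<eta> (atom_index B x)))"
    unfolding exp_sum[OF finite_atLeastAtMost]
    using weight_pos[OF \<eta> model_partition_atom_index_less[OF B]] by (intro prod.cong) auto
  with weighted_log_bound[OF \<eta> B dF] show ?thesis by (simp add: sum_negf)
qed

text \<open>Weight every labelling of \<open>{1..n}\<close> compatible with \<open>B'\<close> by the product of the
  \<open>weight\<close>s: the total weight is \<open>1\<close>, and each member of the fibre carries weight at least
  \<open>exp (- n K)\<close>.\<close>
lemma card_coarsen_fiber_le:
  assumes \<eta>: "\<eta> > 0"
  shows "card {B \<in> AP M T F \<delta> \<sigma> n \<epsilon>. coarsen c u\<delta> B = B'}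
    \<le> exp (n * (cond_entropy_approx \<eta> + \<epsilon> * log_weight_bound \<eta>))"
proof (cases "{B \<in> AP M T F \<delta> \<sigma> n \<epsilon>. coarsen c u\<delta> B = B'} = {}")
  case True
  then show ?thesis by (simp only: card.empty) simp
next
  case False
  let ?S = "{B \<in> AP M T F \<delta> \<sigma> n \<epsilon>. coarsen c u\<delta> B = B'}"
  let ?K = "cond_entropy_approx \<eta> + \<epsilon> * log_weight_bound \<eta>"
  obtain B0 where B0: "B0 \<in> ?S" using False by blast
  have S: "model_partition u\<delta> B" "dF M T F \<delta> \<sigma> n B \<le> \<epsilon>" "coarsen c u\<delta> B = B'" if "B \<in> ?S" for B
    using that by (auto simp: AP_eq)
  have over: "atom_index B x \<in> atoms_over (atom_index B' x)" if "B \<in> ?S" "x \<in> {1..n}" for B x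
    using atom_index_coarsen[OF S(1)[OF that(1)] c_image that(2)] S(3)[OF that(1)]
      model_partition_atom_index_less[OF S(1)[OF that(1)] that(2)]
    by (auto simp: atoms_over_def)
  have weight_pos': "weight \<eta> j > 0" if "j \<in> atoms_over k" for j k
    using weight_pos[OF \<eta>] that by (simp add: atoms_over_def)
  define P where "P = PiE {1..n} (\<lambda>x. atoms_over (atom_index B' x))"
  define W where "W g = (\<Prod>x\<in>{1..n}. weight \<eta> (g x))" for g
  show ?thesis
  proof (rule card_le_exp_of_weight[where g = "\<lambda>B. restrict (atom_index B) {1..n}" and P = P and W = W])
    show "finite P" unfolding P_def by (auto intro: finite_PiE finite_atoms_over)
    show "0 \<le> W g" if "g \<in> P" for g
      unfolding W_def using that weight_pos' by (intro prod_nonneg) (force simp: P_def less_imp_le)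
    have "(\<Sum>g\<in>P. W g) = (\<Prod>x\<in>{1..n}. \<Sum>j\<in>atoms_over (atom_index B' x). weight \<eta> j)"
      unfolding W_def P_def by (rule prod_sum_PiE[symmetric]) (auto simp: finite_atoms_over)
    also have "\<dots> = 1"
      using sum_weight_atoms_over[OF \<eta>] over[OF B0] by (intro prod.neutral) blast
    finally show "(\<Sum>g\<in>P. W g) = 1" .
    show "inj_on (\<lambda>B. restrict (atom_index B) {1..n}) ?S"
      using S(1) by (blast intro: inj_on_subset[OF inj_on_restrict_atom_index])
    show "(\<lambda>B. restrict (atom_index B) {1..n}) ` ?S \<subseteq> P"
      unfolding P_def using over by auto
    show "exp (- (n * ?K)) \<le> W (restrict (atom_index B) {1..n})" if "B \<in> ?S" for B
      unfolding W_def using prod_weight_ge[OF \<eta> S(1,2)[OF that]] by simp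
  qed
qed

lemma card_AP_le:
  assumes \<eta>: "\<eta> > 0"
  shows "card (AP M T F \<delta> \<sigma> n \<epsilon>)
    \<le> card (AP M T F \<gamma> \<sigma> n \<epsilon>) * exp (n * (cond_entropy_approx \<eta> + \<epsilon> * log_weight_bound \<eta>))"
proof -
  let ?A = "AP M T F \<delta> \<sigma> n \<epsilon>" and ?E = "exp (n * (cond_entropy_approx \<eta> + \<epsilon> * log_weight_bound \<eta>))"
  have sub: "coarsen c u\<delta> ` ?A \<subseteq> AP M T F \<gamma> \<sigma> n \<epsilon>"
    using model_partition_coarsen[OF _ c_image] dF_coarsen_le by (force simp: AP_eq)
  have "real (card ?A) = (\<Sum>B\<in>?A. 1)" by simp
  also have "\<dots> = (\<Sum>B'\<in>coarsen c u\<delta> ` ?A. \<Sum>B\<in>{B \<in> ?A. coarsen c u\<delta> B = B'}. 1)"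
    by (rule sum.group[symmetric]) (auto intro: finite_AP)
  also have "\<dots> \<le> (\<Sum>B'\<in>coarsen c u\<delta> ` ?A. ?E)"
    using card_coarsen_fiber_le[OF \<eta>] by (intro sum_mono) simp
  also have "\<dots> \<le> card (AP M T F \<gamma> \<sigma> n \<epsilon>) * ?E"
    using card_mono[OF finite_AP sub] by (simp add: mult_right_mono)
  finally show ?thesis .
qed

end

section \<open>Sofic entropy along refinements\<close>

definition log_count :: "nat \<Rightarrow> nat \<Rightarrow> ereal" where
  "log_count k n = (if k = 0 then -\<infinity> else ereal (ln (real k) / real n))"

lemma sofic_H_fin_log_count:
  "sofic_H_fin M T \<sigma> m F \<alpha>
    = Lim (at_right 0) (\<lambda>\<epsilon>. limsup (\<lambda>i. log_count (card (AP M T F \<alpha> (\<sigma> i) (m i) \<epsilon>)) (m i)))"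
  unfolding sofic_H_fin_def log_count_def Let_def by simp

lemma log_count_mono: "k \<le> k' \<Longrightarrow> log_count k n \<le> log_count k' n"
  unfolding log_count_def by (auto intro!: divide_right_mono)

lemma log_count_le_add:
  assumes n: "n > 0" and k: "real k \<le> real k' * exp (n * K)"
  shows "log_count k n \<le> log_count k' n + ereal K"
proof (cases "k = 0")
  case False
  have "k' \<noteq> 0"
  proof
    assume "k' = 0"
    then show False using k False by simp
  qed
  have "ln (real k) \<le> ln (real k' * exp (n * K))"
    using k False by (subst ln_le_cancel_iff) auto
  also have "\<dots> = ln (real k') + n * K" using \<open>k' \<noteq> 0\<close> by (simp add: ln_mult)
  finally have "ln (real k) / n \<le> ln (real k') / n + K" using n by (simp add: field_simps)
  then show ?thesis using False \<open>k' \<noteq> 0\<close> by (simp add: log_count_def)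
qed (simp add: log_count_def)

lemma ereal_le_add_of_tendsto_at_right:
  fixes f g :: "real \<Rightarrow> ereal" and h :: "real \<Rightarrow> real"
  assumes f: "(f \<longlongrightarrow> a) (at_right 0)" and g: "(g \<longlongrightarrow> b) (at_right 0)" and h: "(h \<longlongrightarrow> c) (at_right 0)"
    and le: "\<And>x. 0 < x \<Longrightarrow> f x \<le> g x + ereal (h x)"
  shows "a \<le> b + ereal c"
proof (rule tendsto_le[of "at_right (0::real)"])
  show "((\<lambda>x. g x + ereal (h x)) \<longlongrightarrow> b + ereal c) (at_right 0)"
    by (rule tendsto_add_ereal_general1[OF _ g tendsto_ereal[OF h]]) simp
  show "eventually (\<lambda>x. f x \<le> g x + ereal (h x)) (at_right 0)"
    using eventually_at_right_less[of "0::real"] by eventually_elim (rule le)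
qed (use f in simp_all)

lemma sofic_H_fin_tendsto:
  assumes \<sigma>: "map_sequence \<sigma> m" and mp: "mp_action M T" and F: "finite F" "F \<noteq> {}"
  shows "((\<lambda>\<epsilon>. limsup (\<lambda>i. log_count (card (AP M T F \<alpha> (\<sigma> i) (m i) \<epsilon>)) (m i)))
    \<longlongrightarrow> sofic_H_fin M T \<sigma> m F \<alpha>) (at_right 0)"
  unfolding sofic_H_fin_log_count
proof (rule tendsto_Lim_at_right_mono)
  fix a b :: real assume "0 < a" "a \<le> b"
  show "limsup (\<lambda>i. log_count (card (AP M T F \<alpha> (\<sigma> i) (m i) a)) (m i))
      \<le> limsup (\<lambda>i. log_count (card (AP M T F \<alpha> (\<sigma> i) (m i) b)) (m i))"
  proof (intro Limsup_mono always_eventually allI log_count_mono card_mono)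
    fix i
    interpret window_model M T F "\<sigma> i" "m i"
      using \<sigma> mp F by unfold_locales (auto simp: mp_action_def map_sequence_def)
    show "finite (AP M T F \<alpha> (\<sigma> i) (m i) b)" by (rule finite_AP)
    show "AP M T F \<alpha> (\<sigma> i) (m i) a \<subseteq> AP M T F \<alpha> (\<sigma> i) (m i) b"
      unfolding AP_def using \<open>a \<le> b\<close> by auto
  qed
qed

theorem sofic_H_fin_sub_entropy_antimono:
  assumes \<sigma>: "map_sequence \<sigma> m" and mp: "mp_action M T" and F: "finite F" "F \<noteq> {}"
    and \<gamma>: "is_partition M \<gamma>" "finite_part M \<gamma>" and \<delta>: "is_partition M \<delta>" "finite_part M \<delta>"
    and refines: "part_le M \<gamma> \<delta>"
  shows "sofic_H_fin M T \<sigma> m F \<delta> - ereal (part_entropy M \<delta>)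
    \<le> sofic_H_fin M T \<sigma> m F \<gamma> - ereal (part_entropy M \<gamma>)"
proof -
  interpret refinement M T F \<gamma> \<delta>
    using mp F \<gamma> \<delta> refines by unfold_locales auto
  have model: "refinement_model M T F \<gamma> \<delta> (\<sigma> i) (m i)" for i
    using \<sigma> mp F \<gamma> \<delta> refines by unfold_locales (auto simp: map_sequence_def)
  define g where "g \<alpha> \<epsilon> = limsup (\<lambda>i. log_count (card (AP M T F \<alpha> (\<sigma> i) (m i) \<epsilon>)) (m i))" for \<alpha> \<epsilon>
  let ?K = "\<lambda>\<eta> \<epsilon>. cond_entropy_approx \<eta> + \<epsilon> * log_weight_bound \<eta>"
  have "eventually (\<lambda>i. 1 \<le> m i) sequentially"
    using \<sigma> unfolding map_sequence_def filterlim_at_top by blast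
  then have "eventually (\<lambda>i. 0 < m i) sequentially" by eventually_elim simp
  then have step: "g \<delta> \<epsilon> \<le> g \<gamma> \<epsilon> + ereal (?K \<eta> \<epsilon>)" if "0 < \<eta>" "0 < \<epsilon>" for \<eta> \<epsilon>
    unfolding g_def Limsup_add_ereal_right[OF sequentially_bot, symmetric, of "ereal (?K \<eta> \<epsilon>)", simplified]
    by (intro Limsup_mono, elim eventually_mono)
       (intro log_count_le_add refinement_model.card_AP_le[OF model] that)
  let ?H = "sofic_H_fin M T \<sigma> m F"
  have "?H \<delta> \<le> ?H \<gamma> + ereal (cond_entropy_approx \<eta>)" if \<eta>: "0 < \<eta>" for \<eta>
  proof (rule ereal_le_add_of_tendsto_at_right[OF _ _ _ step[OF \<eta>]])
    show "((\<lambda>\<epsilon>. ?K \<eta> \<epsilon>) \<longlongrightarrow> cond_entropy_approx \<eta>) (at_right 0)"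
      by (auto intro!: tendsto_eq_intros tendsto_ident_at)
  qed (use sofic_H_fin_tendsto[OF \<sigma> mp F] in \<open>simp_all add: g_def\<close>)
  then have "?H \<delta> \<le> ?H \<gamma> + ereal (part_entropy M \<delta> - part_entropy M \<gamma>)"
    by (intro ereal_le_add_of_tendsto_at_right[OF tendsto_const tendsto_const cond_entropy_approx_tendsto])
  then show ?thesis by (cases "?H \<delta>"; cases "?H \<gamma>") auto
qed

lemma lim_decseq_add_ereal:
  fixes u :: "nat \<Rightarrow> ereal"
  assumes "decseq u" and "v \<longlonglongrightarrow> c"
  shows "lim (\<lambda>n. u n + ereal (v n)) = (INF n. u n) + ereal c"
  by (intro limI tendsto_add_ereal_general1 LIMSEQ_INF tendsto_ereal assms) simp

lemma decseq_sofic_H_fin_sub_entropy_chain: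
  assumes \<sigma>: "map_sequence \<sigma> m" and mp: "mp_action M T" and F: "finite F" "F \<noteq> {}"
    and ch: "is_chain M \<gamma>s \<gamma>"
  shows "decseq (\<lambda>n. sofic_H_fin M T \<sigma> m F (\<gamma>s n) - ereal (part_entropy M (\<gamma>s n)))"
proof -
  interpret prob_space M using mp by (simp add: mp_action_def)
  note \<gamma>s = chain_partition[OF ch] chain_finite_part[OF ch]
  show ?thesis
    unfolding decseq_Suc_iff
    using sofic_H_fin_sub_entropy_antimono[OF \<sigma> mp F \<gamma>s \<gamma>s chain_le_Suc[OF ch]] by blast
qed

lemma lim_sofic_H_fin_chain:
  assumes \<sigma>: "map_sequence \<sigma> m" and mp: "mp_action M T" and F: "finite F" "F \<noteq> {}"
    and ch: "is_chain M \<gamma>s \<gamma>" and P: "in_P M \<gamma>"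
  shows "lim (\<lambda>n. sofic_H_fin M T \<sigma> m F (\<gamma>s n))
    = (INF n. sofic_H_fin M T \<sigma> m F (\<gamma>s n) - ereal (part_entropy M (\<gamma>s n))) + ereal (part_entropy M \<gamma>)"
proof -
  interpret prob_space M using mp by (simp add: mp_action_def)
  have "(\<lambda>n. sofic_H_fin M T \<sigma> m F (\<gamma>s n))
      = (\<lambda>n. (sofic_H_fin M T \<sigma> m F (\<gamma>s n) - ereal (part_entropy M (\<gamma>s n))) + ereal (part_entropy M (\<gamma>s n)))"
  proof
    fix n show "sofic_H_fin M T \<sigma> m F (\<gamma>s n)
      = (sofic_H_fin M T \<sigma> m F (\<gamma>s n) - ereal (part_entropy M (\<gamma>s n))) + ereal (part_entropy M (\<gamma>s n))"
      by (cases "sofic_H_fin M T \<sigma> m F (\<gamma>s n)") auto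
  qed
  then show ?thesis
    using lim_decseq_add_ereal[OF decseq_sofic_H_fin_sub_entropy_chain[OF \<sigma> mp F ch]
        part_entropy_chain_tendsto[OF ch P]]
    by simp
qed

lemma sofic_H_sub_entropy_le_INF_chain:
  assumes \<sigma>: "map_sequence \<sigma> m" and mp: "mp_action M T" and F: "finite F" "F \<noteq> {}"
    and ch: "is_chain M \<alpha>s \<alpha>" and P: "in_P M \<alpha>"
  shows "sofic_H M T \<sigma> m F \<alpha> - ereal (part_entropy M \<alpha>)
    \<le> (INF n. sofic_H_fin M T \<sigma> m F (\<alpha>s n) - ereal (part_entropy M (\<alpha>s n)))"
proof (cases "finite_part M \<alpha>")
  case True
  interpret prob_space M using mp by (simp add: mp_action_def)
  have "is_partition M \<alpha>" using P by (simp add: in_P_def)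
  then show ?thesis
    unfolding sofic_H_def using True
    by (auto intro!: INF_greatest sofic_H_fin_sub_entropy_antimono[OF \<sigma> mp F]
        chain_partition[OF ch] chain_finite_part[OF ch] chain_le_limit[OF ch])
next
  case False
  then have "sofic_H M T \<sigma> m F \<alpha> \<le> lim (\<lambda>n. sofic_H_fin M T \<sigma> m F (\<alpha>s n))"
    unfolding sofic_H_def using ch by (auto intro: Inf_lower)
  then show ?thesis
    unfolding lim_sofic_H_fin_chain[OF \<sigma> mp F ch P]
    by (cases "sofic_H M T \<sigma> m F \<alpha>"; cases "INF n. sofic_H_fin M T \<sigma> m F (\<alpha>s n) - ereal (part_entropy M (\<alpha>s n))")
       auto
qed

lemma sofic_H_sub_entropy_le_chain:
  assumes \<sigma>: "map_sequence \<sigma> m" and mp: "mp_action M T" and F: "finite F" "F \<noteq> {}"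
    and P: "in_P M \<alpha>" "in_P M \<beta>" and refines: "part_le M \<beta> \<alpha>" and ch: "is_chain M \<beta>s \<beta>"
  shows "sofic_H M T \<sigma> m F \<alpha> - ereal (part_entropy M \<alpha>)
    \<le> lim (\<lambda>n. sofic_H_fin M T \<sigma> m F (\<beta>s n)) - ereal (part_entropy M \<beta>)"
proof -
  interpret prob_space M using mp by (simp add: mp_action_def)
  let ?E = "\<lambda>\<gamma>. sofic_H_fin M T \<sigma> m F \<gamma> - ereal (part_entropy M \<gamma>)"
  have \<alpha>: "is_partition M \<alpha>" and \<beta>: "is_partition M \<beta>" using P by (simp_all add: in_P_def)
  note \<beta>s = chain_partition[OF ch] chain_finite_part[OF ch]
  have ch\<alpha>: "is_chain M (truncated_chain \<alpha> \<beta>s) \<alpha>" by (rule is_chain_truncated_chain[OF \<alpha> \<beta> refines ch])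
  have "?E (truncated_chain \<alpha> \<beta>s n) \<le> ?E (\<beta>s n)" for n
  proof -
    have "part_le M (\<beta>s n) \<alpha>" by (rule part_le_trans[OF \<beta>s(1) \<beta> \<alpha> chain_le_limit[OF ch] refines])
    then show ?thesis
      by (intro sofic_H_fin_sub_entropy_antimono[OF \<sigma> mp F] \<beta>s
          truncated_chain_partition[where \<beta>s = \<beta>s, OF \<alpha> \<beta>s(1)] truncated_chain_finite_part[where \<beta>s = \<beta>s, OF \<beta>s]
          part_le_truncated_chain[where \<beta>s = \<beta>s, OF \<alpha> \<beta>s(1)])
  qed
  then have "(INF n. ?E (truncated_chain \<alpha> \<beta>s n)) \<le> (INF n. ?E (\<beta>s n))" by (intro INF_mono) blast
  with sofic_H_sub_entropy_le_INF_chain[OF \<sigma> mp F ch\<alpha> P(1)]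
  have "sofic_H M T \<sigma> m F \<alpha> - ereal (part_entropy M \<alpha>) \<le> (INF n. ?E (\<beta>s n))" by (rule order_trans)
  then show ?thesis
    unfolding lim_sofic_H_fin_chain[OF \<sigma> mp F ch P(2)] by (cases "INF n. ?E (\<beta>s n)") auto
qed

theorem proposition5p3:
  fixes M :: "'x measure"
    and T :: "'g::{group_add,countable} \<Rightarrow> 'x \<Rightarrow> 'x"
    and \<sigma> :: "nat \<Rightarrow> 'g \<Rightarrow> nat \<Rightarrow> nat" and m :: "nat \<Rightarrow> nat"
    and \<alpha> \<beta> :: "nat \<Rightarrow> 'x set" and F :: "'g set"
  assumes "map_sequence \<sigma> m"
    and "mp_action M T"
    and "in_P M \<alpha>" and "in_P M \<beta>"
    and "part_le M \<beta> \<alpha>"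
    and "finite F" and "F \<noteq> {}"
  shows "sofic_H M T \<sigma> m F \<beta> - ereal (part_entropy M \<beta>)
           \<ge> sofic_H M T \<sigma> m F \<alpha> - ereal (part_entropy M \<alpha>)"
proof -
  interpret prob_space M using assms(2) by (simp add: mp_action_def)
  let ?X = "sofic_H M T \<sigma> m F \<alpha> - ereal (part_entropy M \<alpha>)"
  note chain_bound = sofic_H_sub_entropy_le_chain[OF assms(1,2,6,7,3,4,5)]
  show ?thesis
  proof (cases "finite_part M \<beta>")
    case True
    have "is_partition M \<beta>" using assms(4) by (simp add: in_P_def)
    from chain_bound[OF is_chain_const[OF this True]] True show ?thesis
      by (simp add: sofic_H_def limI)
  next
    case False
    have "?X + ereal (part_entropy M \<beta>) \<le> lim (\<lambda>n. sofic_H_fin M T \<sigma> m F (\<beta>s n))"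
      if "is_chain M \<beta>s \<beta>" for \<beta>s
      using chain_bound[OF that] by (cases ?X; cases "lim (\<lambda>n. sofic_H_fin M T \<sigma> m F (\<beta>s n))") auto
    then have "?X + ereal (part_entropy M \<beta>) \<le> sofic_H M T \<sigma> m F \<beta>"
      unfolding sofic_H_def using False by (auto intro: Inf_greatest)
    then show ?thesis by (cases ?X; cases "sofic_H M T \<sigma> m F \<beta>") auto
  qed
qed

end
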